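(* Let $\mathcal{C}_W$, $R=\mathrm{Spec}(C^\infty(\mathbb{R}))$ and $H=\mathrm{Spec}(C^\infty[0,\infty))$ be as in the context, with the monomorphism $H\rightarrowtail R$ induced by the quotient $C^\infty(\mathbb{R})\to C^\infty[0,\infty)$, and let $\Gamma=\mathcal{C}_W(\mathbf{1},-):\mathcal{C}_W\to\mathbf{Set}$ be the points functor, so that $\Gamma R=\mathbb{R}$ and $\Gamma H=[0,\infty)$. Then for every morphism $v:X\to R$ in $\mathcal{C}_W$, $v$ factors through $H\rightarrowtail R$ if and only if $\Gamma v:\Gamma X\to\Gamma R=\mathbb{R}$ factors through $[0,\infty)\subseteq\mathbb{R}$.
   Context: A $C^\infty$-ring is a model of the algebraic theory whose $n$-ary operations are the smooth functions $\mathbb{R}^n\to\mathbb{R}$. $\mathrm{Aff}_{C^\infty}$ is the opposite of the category of finitely generated $C^\infty$-rings, with $\mathrm{Spec}\,A$ denoting $A$ as an object there; its terminal object is $\mathbf{1}=\mathrm{Spec}\,\mathbb{R}$, so points of $\mathrm{Spec}\,A$ are $C^\infty$-homomorphisms $A\to\mathbb{R}$. $\mathcal{C}$ is the full subcategory of objects $\mathrm{Spec}\,A$ with $A$ having exactly two idempotents and at least one point. A Weil algebra is a finite-dimensional $\mathbb{R}$-algebra $\mathbb{R}\oplus N$ with $N$ nilpotent. A $C^\infty$-ring $A$ is W-determined if the family of all $C^\infty$-homomorphisms $A\to W$ with $W$ a Weil algebra is jointly monic. $\mathcal{C}_W$ is the full subcategory of $\mathcal{C}$ of the $\mathrm{Spec}\,A$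 with $A$ W-determined. $C^\infty[0,\infty)=C^\infty(\mathbb{R})/I$ with $I$ the ideal of smooth functions vanishing on $[0,\infty)$; $H$ is an object of $\mathcal{C}_W$. *)

theory Defs
  imports "HOL-Analysis.Analysis"
begin

(* Smooth functions R^n -> R, represented as functions (nat => real) => real that depend
   only on the first n coordinates.  nat => real carries the product topology. *)

fun Ck :: "nat \<Rightarrow> nat \<Rightarrow> ((nat \<Rightarrow> real) \<Rightarrow> real) \<Rightarrow> bool" where
  "Ck 0 n f = continuous_on UNIV f"
| "Ck (Suc k) n f =
     (continuous_on UNIV f \<and>
      (\<forall>i<n. \<forall>x. (\<lambda>t. f (x(i := t))) differentiable (at (x i))) \<and>
      (\<forall>i<n. Ck k n (\<lambda>x. deriv (\<lambda>t. f (x(i := t))) (x i))))"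

definition smooth_fun :: "nat \<Rightarrow> ((nat \<Rightarrow> real) \<Rightarrow> real) \<Rightarrow> bool" where
  "smooth_fun n f \<longleftrightarrow>
     (\<forall>x. f x = f (\<lambda>i. if i < n then x i else 0)) \<and> (\<forall>k. Ck k n f)"

type_synonym 'a cops = "nat \<Rightarrow> ((nat \<Rightarrow> real) \<Rightarrow> real) \<Rightarrow> (nat \<Rightarrow> 'a) \<Rightarrow> 'a"

definition cinf_ring :: "'a set \<Rightarrow> 'a cops \<Rightarrow> bool" where
  "cinf_ring A \<Phi> \<longleftrightarrow>
     (\<forall>n f a. smooth_fun n f \<and> (\<forall>i<n. a i \<in> A) \<longrightarrow> \<Phi> n f a \<in> A) \<and>
     (\<forall>n f a b. smooth_fun n f \<and> (\<forall>i<n. a i = b i) \<longrightarrow> \<Phi> n f a = \<Phi> n f b) \<and>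
     (\<forall>n i a. i < n \<and> (\<forall>j<n. a j \<in> A) \<longrightarrow> \<Phi> n (\<lambda>x. x i) a = a i) \<and>
     (\<forall>n m f g a. smooth_fun n f \<and> (\<forall>i<n. smooth_fun m (g i)) \<and> (\<forall>j<m. a j \<in> A) \<longrightarrow>
        \<Phi> n f (\<lambda>i. \<Phi> m (g i) a) = \<Phi> m (\<lambda>x. f (\<lambda>i. g i x)) a)"

definition cinf_hom :: "'a set \<Rightarrow> 'a cops \<Rightarrow> 'b set \<Rightarrow> 'b cops \<Rightarrow> ('a \<Rightarrow> 'b) \<Rightarrow> bool" where
  "cinf_hom A \<Phi> B \<Psi> h \<longleftrightarrow>
     (\<forall>x\<in>A. h x \<in> B) \<and>
     (\<forall>n f a. smooth_fun n f \<and> (\<forall>i<n. a i \<in> A) \<longrightarrow> h (\<Phi> n f a) = \<Psi> n f (\<lambda>i. h (a i)))"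

definition real_ops :: "real cops" where
  "real_ops n f a = f a"

(* points of Spec A = C^infinity-homomorphisms A -> R *)
definition is_point :: "'a set \<Rightarrow> 'a cops \<Rightarrow> ('a \<Rightarrow> real) \<Rightarrow> bool" where
  "is_point A \<Phi> p \<longleftrightarrow> cinf_hom A \<Phi> UNIV real_ops p"

definition fin_gen :: "'a set \<Rightarrow> 'a cops \<Rightarrow> bool" where
  "fin_gen A \<Phi> \<longleftrightarrow> (\<exists>n a. (\<forall>i<n. a i \<in> A) \<and> (\<forall>x\<in>A. \<exists>f. smooth_fun n f \<and> x = \<Phi> n f a))"

definition cmul :: "'a cops \<Rightarrow> 'a \<Rightarrow> 'a \<Rightarrow> 'a" where
  "cmul \<Phi> x y = \<Phi> 2 (\<lambda>z. z 0 * z 1) (\<lambda>i. if i = 0 then x else y)"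

definition cconst :: "'a cops \<Rightarrow> real \<Rightarrow> 'a" where
  "cconst \<Phi> c = \<Phi> 0 (\<lambda>_. c) (\<lambda>_. undefined)"

definition idempotents :: "'a set \<Rightarrow> 'a cops \<Rightarrow> 'a set" where
  "idempotents A \<Phi> = {e \<in> A. cmul \<Phi> e e = e}"

(* Weil algebra: C^infinity-ring whose underlying R-algebra is finite-dimensional
   and of the form R (+) N with N nilpotent.  Carrier inside nat => real (every
   finite-dimensional real vector space embeds there). *)
definition weil :: "(nat \<Rightarrow> real) set \<Rightarrow> (nat \<Rightarrow> real) cops \<Rightarrow> bool" where
  "weil W \<Psi> \<longleftrightarrow> cinf_ring W \<Psi> \<and>
     (\<exists>k b. (\<forall>i<k. b i \<in> W) \<and> (\<forall>w\<in>W. \<exists>c. w = \<Psi> k (\<lambda>x. \<Sum>i<k. c i * x i) b)) \<and>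
     cconst \<Psi> 0 \<noteq> cconst \<Psi> 1 \<and>
     (\<forall>w\<in>W. \<exists>c m. m \<in> W \<and> (\<exists>r. \<Psi> 1 (\<lambda>x. x 0 ^ r) (\<lambda>_. m) = cconst \<Psi> 0) \<and>
                 w = \<Psi> 1 (\<lambda>x. c + x 0) (\<lambda>_. m))"

definition W_determined :: "'a set \<Rightarrow> 'a cops \<Rightarrow> bool" where
  "W_determined A \<Phi> \<longleftrightarrow>
     (\<forall>x\<in>A. \<forall>y\<in>A. x \<noteq> y \<longrightarrow>
        (\<exists>W \<Psi> h. weil W \<Psi> \<and> cinf_hom A \<Phi> W \<Psi> h \<and> h x \<noteq> h y))"

(* Spec A is an object of C_W *)
definition in_CW :: "'a set \<Rightarrow> 'a cops \<Rightarrow> bool" where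
  "in_CW A \<Phi> \<longleftrightarrow> cinf_ring A \<Phi> \<and> fin_gen A \<Phi> \<and> card (idempotents A \<Phi>) = 2 \<and>
     (\<exists>p. is_point A \<Phi> p) \<and> W_determined A \<Phi>"

definition CinfR :: "(real \<Rightarrow> real) set" where
  "CinfR = {g. smooth_fun 1 (\<lambda>x. g (x 0))}"

definition CinfR_ops :: "(real \<Rightarrow> real) cops" where
  "CinfR_ops n f g = (\<lambda>t. f (\<lambda>i. g i t))"

(* C^infinity[0,inf) = C^infinity(R)/I, I = smooth functions vanishing on [0,inf);
   elements are the cosets g + I *)
definition qH :: "(real \<Rightarrow> real) \<Rightarrow> (real \<Rightarrow> real) set" where
  "qH g = {h \<in> CinfR. \<forall>t\<ge>0. h t - g t = 0}"

definition CinfH :: "(real \<Rightarrow> real) set set" where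
  "CinfH = qH ` CinfR"

definition CinfH_ops :: "(real \<Rightarrow> real) set cops" where
  "CinfH_ops n f c = qH (CinfR_ops n f (\<lambda>i. SOME g. g \<in> CinfR \<and> c i = qH g))"

end

theory Submission
  imports Defs "HOL-Computational_Algebra.Polynomial"
begin

(* The monomorphism H >-> R is the quotient by the ideal I of smooth functions vanishing on
   [0,oo), so v factors through it iff v kills I.  If it does, v kills g(s) = flat(-s), which
   vanishes on [0,oo) and is positive on (-oo,0); evaluating at a point p gives g(p(v id)) = 0,
   i.e. p(v id) >= 0.
   Conversely, since A is W-determined it suffices that h o v kills I for every homomorphism h
   from A to a Weil algebra W.  Every w in W has a real part c with (w - c)^r = 0 for some r,
   and taking real parts is a C^oo-homomorphism W -> R, so c is the value of the point
   real_part o h at v id and hence c >= 0.  Applying Hadamard's lemma r times at c >= 0 writes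
   any g in I as g(s) = (s - c)^r e(s), whence g(w) = (w - c)^r e(w) = 0. *)

section \<open>Smooth functions of finitely many variables\<close>

definition trunc_coords :: "nat \<Rightarrow> (nat \<Rightarrow> real) \<Rightarrow> nat \<Rightarrow> real" where
  "trunc_coords n x = (\<lambda>i. if i < n then x i else 0)"

definition depends_on_first :: "nat \<Rightarrow> ((nat \<Rightarrow> real) \<Rightarrow> real) \<Rightarrow> bool" where
  "depends_on_first n f \<longleftrightarrow> (\<forall>x. f x = f (trunc_coords n x))"

definition partial_deriv :: "nat \<Rightarrow> ((nat \<Rightarrow> real) \<Rightarrow> real) \<Rightarrow> (nat \<Rightarrow> real) \<Rightarrow> real" where
  "partial_deriv i f = (\<lambda>x. deriv (\<lambda>t. f (x(i := t))) (x i))"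

lemma smooth_fun_iff: "smooth_fun n f \<longleftrightarrow> depends_on_first n f \<and> (\<forall>k. Ck k n f)"
  by (simp add: smooth_fun_def depends_on_first_def trunc_coords_def)

lemma Ck_Suc_iff: "Ck (Suc k) n f \<longleftrightarrow> continuous_on UNIV f \<and>
      (\<forall>i<n. \<forall>x. (\<lambda>t. f (x(i := t))) differentiable (at (x i))) \<and> (\<forall>i<n. Ck k n (partial_deriv i f))"
  by (simp add: partial_deriv_def)

lemma Ck_imp_continuous: "Ck k n f \<Longrightarrow> continuous_on UNIV f"
  by (cases k) auto

lemma Ck_Suc_imp_Ck: "Ck (Suc k) n f \<Longrightarrow> Ck k n f"
proof (induction k arbitrary: f)
  case 0 then show ?case by simp
next
  case (Suc k) then show ?case by (simp add: Ck_Suc_iff del: Ck.simps)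
qed

lemma Ck_Suc_partial_deriv: "Ck (Suc k) n f \<Longrightarrow> i < n \<Longrightarrow> Ck k n (partial_deriv i f)"
  by (simp add: Ck_Suc_iff del: Ck.simps)

lemma Ck_partial_DERIV:
  assumes "Ck (Suc k) n f" "i < n"
  shows "((\<lambda>t. f (x(i := t))) has_real_derivative partial_deriv i f (x(i := s))) (at s)"
proof -
  have "\<forall>x. (\<lambda>t. f (x(i := t))) differentiable (at (x i))"
    using assms by (simp add: Ck_Suc_iff del: Ck.simps)
  then have "(\<lambda>t. f ((x(i := s))(i := t))) differentiable (at ((x(i := s)) i))"
    by blast
  then have "(\<lambda>t. f (x(i := t))) differentiable (at s)"
    by simp
  then show ?thesis
    by (simp add: partial_deriv_def DERIV_deriv_iff_real_differentiable)
qed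

lemma isCont_partial_deriv: "Ck (Suc k) n f \<Longrightarrow> i < n \<Longrightarrow> isCont (partial_deriv i f) x"
  using Ck_imp_continuous[OF Ck_Suc_partial_deriv, of k n f i] by (simp add: continuous_on_eq_continuous_at)

lemma Ck_SucI:
  assumes "continuous_on UNIV f"
    and "\<And>i x s. i < n \<Longrightarrow> ((\<lambda>t. f (x(i := t))) has_real_derivative D i (x(i := s))) (at s)"
    and "\<And>i. i < n \<Longrightarrow> Ck k n (D i)"
  shows "Ck (Suc k) n f"
proof -
  have "partial_deriv i f = D i" if "i < n" for i
  proof
    fix x
    have "partial_deriv i f x = D i (x(i := x i))"
      unfolding partial_deriv_def by (rule DERIV_imp_deriv) (rule assms(2)[OF that])
    then show "partial_deriv i f x = D i x" by simp
  qed
  moreover have "(\<lambda>t. f (x(i := t))) differentiable (at (x i))" if "i < n" for i x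
    using assms(2)[OF that, of x "x i"] real_differentiable_def by auto
  ultimately show ?thesis
    using assms(1,3) by (simp add: Ck_Suc_iff del: Ck.simps)
qed

lemma Ck_const: "Ck k n (\<lambda>_. c)"
proof (induction k arbitrary: c)
  case 0 then show ?case by simp
next
  case (Suc k)
  show ?case by (rule Ck_SucI[where D="\<lambda>i x. 0"]) (auto intro: Suc)
qed

lemma Ck_proj: "Ck k n (\<lambda>x. x j)"
proof (cases k)
  case 0 then show ?thesis by simp
next
  case (Suc k')
  show ?thesis unfolding Suc
    by (rule Ck_SucI[where D="\<lambda>i x. if i = j then 1 else 0"])
       (auto intro!: derivative_eq_intros Ck_const simp: continuous_on_product_coordinates)
qed

lemma Ck_add:
  assumes "Ck k n f" "Ck k n g" shows "Ck k n (\<lambda>x. f x + g x)"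
  using assms
proof (induction k arbitrary: f g)
  case 0 then show ?case by (auto intro: continuous_intros)
next
  case (Suc k)
  show ?case
  proof (rule Ck_SucI[where D="\<lambda>i x. partial_deriv i f x + partial_deriv i g x"])
    show "continuous_on UNIV (\<lambda>x. f x + g x)"
      using Ck_imp_continuous Suc.prems by (auto intro: continuous_intros)
  next
    fix i x s assume "i < n"
    show "((\<lambda>t. f (x(i := t)) + g (x(i := t))) has_real_derivative
        partial_deriv i f (x(i := s)) + partial_deriv i g (x(i := s))) (at s)"
      using Ck_partial_DERIV[OF Suc.prems(1) \<open>i < n\<close>] Ck_partial_DERIV[OF Suc.prems(2) \<open>i < n\<close>]
      by (rule DERIV_add)
  next
    fix i assume "i < n"
    then show "Ck k n (\<lambda>x. partial_deriv i f x + partial_deriv i g x)"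
      using Suc.IH Suc.prems Ck_Suc_partial_deriv by blast
  qed
qed

lemma Ck_mult:
  assumes "Ck k n f" "Ck k n g" shows "Ck k n (\<lambda>x. f x * g x)"
  using assms
proof (induction k arbitrary: f g)
  case 0 then show ?case by (auto intro: continuous_intros)
next
  case (Suc k)
  show ?case
  proof (rule Ck_SucI[where D="\<lambda>i x. partial_deriv i f x * g x + f x * partial_deriv i g x"])
    show "continuous_on UNIV (\<lambda>x. f x * g x)"
      using Ck_imp_continuous Suc.prems by (auto intro: continuous_intros)
  next
    fix i x s assume "i < n"
    show "((\<lambda>t. f (x(i := t)) * g (x(i := t))) has_real_derivative
        partial_deriv i f (x(i := s)) * g (x(i := s)) + f (x(i := s)) * partial_deriv i g (x(i := s))) (at s)"
      by (rule DERIV_cong[OF DERIV_mult[OF Ck_partial_DERIV[OF Suc.prems(1) \<open>i < n\<close>]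
            Ck_partial_DERIV[OF Suc.prems(2) \<open>i < n\<close>]]]) (simp add: algebra_simps fun_upd_def)
  next
    fix i assume "i < n"
    then show "Ck k n (\<lambda>x. partial_deriv i f x * g x + f x * partial_deriv i g x)"
      using Suc.IH Suc.prems Ck_Suc_imp_Ck Ck_Suc_partial_deriv Ck_add by metis
  qed
qed

lemma Ck_sum:
  assumes "\<And>j. j \<in> J \<Longrightarrow> Ck k n (f j)" shows "Ck k n (\<lambda>x. \<Sum>j\<in>J. f j x)"
  using assms
  by (induction J rule: infinite_finite_induct) (simp_all add: Ck_const Ck_add)

lemma Ck_inverse:
  assumes "Ck k n f" "\<And>x. f x \<noteq> 0" shows "Ck k n (\<lambda>x. inverse (f x))"
  using assms
proof (induction k arbitrary: f)
  case 0 then show ?case by (auto intro!: continuous_on_inverse)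
next
  case (Suc k)
  show ?case
  proof (rule Ck_SucI[where D="\<lambda>i x. - (partial_deriv i f x * (inverse (f x) * inverse (f x)))"])
    show "continuous_on UNIV (\<lambda>x. inverse (f x))"
      using Ck_imp_continuous[OF Suc.prems(1)] Suc.prems(2) by (auto intro!: continuous_on_inverse)
  next
    fix i x s assume "i < n"
    show "((\<lambda>t. inverse (f (x(i := t)))) has_real_derivative
        - (partial_deriv i f (x(i := s)) * (inverse (f (x(i := s))) * inverse (f (x(i := s)))))) (at s)"
      by (rule DERIV_cong[OF DERIV_inverse_fun[OF Ck_partial_DERIV[OF Suc.prems(1) \<open>i < n\<close>]
            Suc.prems(2)]]) (simp only: power_Suc power_0 mult_1_right inverse_mult_distrib)
  next
    fix i assume "i < n"
    have inv: "Ck k n (\<lambda>x. inverse (f x))"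
      using Suc.IH Suc.prems Ck_Suc_imp_Ck by blast
    have "Ck k n (\<lambda>x. (-1) * (partial_deriv i f x * (inverse (f x) * inverse (f x))))"
      by (intro Ck_mult Ck_const inv Ck_Suc_partial_deriv[OF Suc.prems(1) \<open>i < n\<close>])
    then show "Ck k n (\<lambda>x. - (partial_deriv i f x * (inverse (f x) * inverse (f x))))" by simp
  qed
qed

lemma tendsto_coordinatewise:
  fixes X :: "'a \<Rightarrow> nat \<Rightarrow> real"
  assumes "\<And>i. ((\<lambda>t. X t i) \<longlongrightarrow> L i) F"
  shows "(X \<longlongrightarrow> L) F"
proof -
  have "limitin (product_topology (\<lambda>_. euclidean) UNIV) X L F"
    unfolding limitin_componentwise using assms by simp
  then show ?thesis by (simp add: euclidean_product_topology)
qed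

lemma MVT_abs:
  fixes g :: "real \<Rightarrow> real"
  assumes "\<And>s. (g has_real_derivative g' s) (at s)"
  shows "\<exists>z. \<bar>z - a\<bar> \<le> \<bar>b - a\<bar> \<and> g b - g a = (b - a) * g' z"
proof (cases a b rule: linorder_cases)
  case less
  from MVT2[OF less, of g g'] assms obtain z where "a < z" "z < b" "g b - g a = (b - a) * g' z" by blast
  then show ?thesis by (intro exI[of _ z]) auto
next
  case equal then show ?thesis by auto
next
  case greater
  from MVT2[OF greater, of g g'] assms obtain z where "b < z" "z < a" "g a - g b = (a - b) * g' z" by blast
  then show ?thesis by (intro exI[of _ z]) (auto simp: algebra_simps)
qed

lemma tendsto_squeezed_by_isCont:
  fixes \<xi> \<gamma> :: "real \<Rightarrow> real"
  assumes "isCont \<gamma> t\<^sub>0" "\<And>t. \<bar>\<xi> t - \<gamma> t\<^sub>0\<bar> \<le> \<bar>\<gamma> t - \<gamma> t\<^sub>0\<bar>"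
  shows "(\<xi> \<longlongrightarrow> \<gamma> t\<^sub>0) (at t\<^sub>0)"
proof -
  have "((\<lambda>t. \<gamma> t - \<gamma> t\<^sub>0) \<longlongrightarrow> 0) (at t\<^sub>0)"
    using assms(1) unfolding isCont_def by (simp add: LIM_zero)
  then have "((\<lambda>t. \<bar>\<gamma> t - \<gamma> t\<^sub>0\<bar>) \<longlongrightarrow> 0) (at t\<^sub>0)"
    by (simp add: tendsto_rabs_zero)
  then have "((\<lambda>t. \<xi> t - \<gamma> t\<^sub>0) \<longlongrightarrow> 0) (at t\<^sub>0)"
    by (rule Lim_null_comparison[rotated]) (use assms(2) in auto)
  then show ?thesis by (simp add: LIM_zero_iff)
qed

text \<open>The chain rule is proved by moving the coordinates of the argument from \<open>\<gamma> t\<^sub>0\<close> to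
  \<open>\<gamma> t\<close> one at a time; only separate differentiability in each variable (plus continuity of the
  partial derivatives) is available.\<close>

definition partial_path :: "(real \<Rightarrow> nat \<Rightarrow> real) \<Rightarrow> real \<Rightarrow> nat \<Rightarrow> real \<Rightarrow> nat \<Rightarrow> real" where
  "partial_path \<gamma> t\<^sub>0 l t = (\<lambda>i. if i < l then \<gamma> t i else \<gamma> t\<^sub>0 i)"

lemma tendsto_partial_path_upd:
  assumes "(\<xi> \<longlongrightarrow> \<gamma> t\<^sub>0 j) (at t\<^sub>0)" "\<And>i. i < j \<Longrightarrow> isCont (\<lambda>t. \<gamma> t i) t\<^sub>0"
  shows "((\<lambda>t. (partial_path \<gamma> t\<^sub>0 j t)(j := \<xi> t)) \<longlongrightarrow> \<gamma> t\<^sub>0) (at t\<^sub>0)"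
proof (rule tendsto_coordinatewise)
  fix i
  consider "i = j" | "i < j" | "i > j" by linarith
  then show "((\<lambda>t. ((partial_path \<gamma> t\<^sub>0 j t)(j := \<xi> t)) i) \<longlongrightarrow> \<gamma> t\<^sub>0 i) (at t\<^sub>0)"
  proof cases
    case 1 then show ?thesis using assms(1) by simp
  next
    case 2 then show ?thesis using assms(2) by (simp add: partial_path_def isCont_def)
  next
    case 3 then show ?thesis by (simp add: partial_path_def)
  qed
qed

lemma partial_path_step_DERIV:
  assumes f: "Ck (Suc k) n f" and j: "j < n"
    and d\<gamma>: "((\<lambda>t. \<gamma> t j) has_real_derivative \<gamma>' j) (at t\<^sub>0)"
    and c\<gamma>: "\<And>i. i < j \<Longrightarrow> isCont (\<lambda>t. \<gamma> t i) t\<^sub>0"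
  shows "((\<lambda>t. f (partial_path \<gamma> t\<^sub>0 (Suc j) t) - f (partial_path \<gamma> t\<^sub>0 j t)) has_real_derivative
           partial_deriv j f (\<gamma> t\<^sub>0) * \<gamma>' j) (at t\<^sub>0)"
proof -
  define D where "D t = f (partial_path \<gamma> t\<^sub>0 (Suc j) t) - f (partial_path \<gamma> t\<^sub>0 j t)" for t
  have path_Suc: "partial_path \<gamma> t\<^sub>0 (Suc j) t = (partial_path \<gamma> t\<^sub>0 j t)(j := \<gamma> t j)" for t
    by (auto simp: partial_path_def fun_eq_iff)
  have path_j: "(partial_path \<gamma> t\<^sub>0 j t)(j := \<gamma> t\<^sub>0 j) = partial_path \<gamma> t\<^sub>0 j t" for t
    by (auto simp: partial_path_def fun_eq_iff)
  have "\<exists>z. \<bar>z - \<gamma> t\<^sub>0 j\<bar> \<le> \<bar>\<gamma> t j - \<gamma> t\<^sub>0 j\<bar> \<and>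
      D t = (\<gamma> t j - \<gamma> t\<^sub>0 j) * partial_deriv j f ((partial_path \<gamma> t\<^sub>0 j t)(j := z))" for t
    using MVT_abs[OF Ck_partial_DERIV[OF f j, of "partial_path \<gamma> t\<^sub>0 j t"], of "\<gamma> t\<^sub>0 j" "\<gamma> t j"]
    unfolding D_def path_Suc path_j .
  then obtain \<xi> where \<xi>: "\<And>t. \<bar>\<xi> t - \<gamma> t\<^sub>0 j\<bar> \<le> \<bar>\<gamma> t j - \<gamma> t\<^sub>0 j\<bar>"
    "\<And>t. D t = (\<gamma> t j - \<gamma> t\<^sub>0 j) * partial_deriv j f ((partial_path \<gamma> t\<^sub>0 j t)(j := \<xi> t))"
    by metis
  define Z where "Z t = (partial_path \<gamma> t\<^sub>0 j t)(j := \<xi> t)" for t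
  have "(\<xi> \<longlongrightarrow> \<gamma> t\<^sub>0 j) (at t\<^sub>0)"
    by (rule tendsto_squeezed_by_isCont[OF DERIV_isCont[OF d\<gamma>] \<xi>(1)])
  then have lim_Z: "(Z \<longlongrightarrow> \<gamma> t\<^sub>0) (at t\<^sub>0)"
    unfolding Z_def using c\<gamma> by (rule tendsto_partial_path_upd)
  have "((\<lambda>t. partial_deriv j f (Z t) * ((\<gamma> t j - \<gamma> t\<^sub>0 j) / (t - t\<^sub>0))) \<longlongrightarrow>
      partial_deriv j f (\<gamma> t\<^sub>0) * \<gamma>' j) (at t\<^sub>0)"
    using isCont_tendsto_compose[OF isCont_partial_deriv[OF f j] lim_Z] d\<gamma>
    by (intro tendsto_mult) (simp_all add: has_field_derivative_iff)
  moreover have "(D t - D t\<^sub>0) / (t - t\<^sub>0) = partial_deriv j f (Z t) * ((\<gamma> t j - \<gamma> t\<^sub>0 j) / (t - t\<^sub>0))" for t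
    using \<xi>(2)[of t] by (simp add: Z_def D_def partial_path_def)
  ultimately have "((\<lambda>t. (D t - D t\<^sub>0) / (t - t\<^sub>0)) \<longlongrightarrow> partial_deriv j f (\<gamma> t\<^sub>0) * \<gamma>' j) (at t\<^sub>0)"
    by (simp only:)
  then have "(D has_real_derivative partial_deriv j f (\<gamma> t\<^sub>0) * \<gamma>' j) (at t\<^sub>0)"
    by (simp only: has_field_derivative_iff)
  then show ?thesis unfolding D_def .
qed

lemma Ck_chain_rule:
  assumes f: "Ck (Suc k) n f" "depends_on_first n f"
    and d\<gamma>: "\<And>i. i < n \<Longrightarrow> ((\<lambda>t. \<gamma> t i) has_real_derivative \<gamma>' i) (at t\<^sub>0)"
  shows "((\<lambda>t. f (\<gamma> t)) has_real_derivative (\<Sum>i<n. partial_deriv i f (\<gamma> t\<^sub>0) * \<gamma>' i)) (at t\<^sub>0)"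
proof -
  have "((\<lambda>t. f (partial_path \<gamma> t\<^sub>0 l t)) has_real_derivative
      (\<Sum>i<l. partial_deriv i f (\<gamma> t\<^sub>0) * \<gamma>' i)) (at t\<^sub>0)" if "l \<le> n" for l
    using that
  proof (induction l)
    case 0
    have "partial_path \<gamma> t\<^sub>0 0 t = \<gamma> t\<^sub>0" for t by (simp add: partial_path_def fun_eq_iff)
    then show ?case by simp
  next
    case (Suc l)
    have "((\<lambda>t. f (partial_path \<gamma> t\<^sub>0 (Suc l) t) - f (partial_path \<gamma> t\<^sub>0 l t)) has_real_derivative
        partial_deriv l f (\<gamma> t\<^sub>0) * \<gamma>' l) (at t\<^sub>0)"
      using Suc.prems by (intro partial_path_step_DERIV[OF f(1)] d\<gamma> DERIV_isCont[OF d\<gamma>]) auto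
    from DERIV_add[OF Suc.IH[OF Suc_leD[OF Suc.prems]] this] show ?case by simp
  qed
  from this[of n] have "((\<lambda>t. f (partial_path \<gamma> t\<^sub>0 n t)) has_real_derivative
      (\<Sum>i<n. partial_deriv i f (\<gamma> t\<^sub>0) * \<gamma>' i)) (at t\<^sub>0)"
    by simp
  moreover have "f (partial_path \<gamma> t\<^sub>0 n t) = f (\<gamma> t)" for t
    using f(2)[unfolded depends_on_first_def, rule_format, of "partial_path \<gamma> t\<^sub>0 n t"]
      f(2)[unfolded depends_on_first_def, rule_format, of "\<gamma> t"]
    by (simp add: trunc_coords_def partial_path_def cong: if_cong)
  ultimately show ?thesis by simp
qed

lemma depends_on_first_partial_deriv:
  assumes "depends_on_first n f" "i < n" shows "depends_on_first n (partial_deriv i f)"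
  unfolding depends_on_first_def
proof
  fix x
  have "f (x(i := t)) = f ((trunc_coords n x)(i := t))" for t
  proof -
    have "trunc_coords n (x(i := t)) = trunc_coords n ((trunc_coords n x)(i := t))"
      using assms(2) by (auto simp: trunc_coords_def fun_eq_iff)
    then show ?thesis using assms(1) unfolding depends_on_first_def by metis
  qed
  moreover have "x i = trunc_coords n x i" using assms(2) by (simp add: trunc_coords_def)
  ultimately show "partial_deriv i f x = partial_deriv i f (trunc_coords n x)"
    unfolding partial_deriv_def by simp
qed

lemma continuous_on_compose_first:
  assumes "depends_on_first n f" "continuous_on UNIV f" "\<And>i. i < n \<Longrightarrow> continuous_on UNIV (g i)"
  shows "continuous_on UNIV (\<lambda>x. f (\<lambda>i. g i x))"
proof -
  have "continuous_on UNIV (\<lambda>x. trunc_coords n (\<lambda>i. g i x))"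
  proof (rule continuous_on_coordinatewise_then_product)
    fix i show "continuous_on UNIV (\<lambda>x. trunc_coords n (\<lambda>i. g i x) i)"
      using assms(3) by (cases "i < n") (simp_all add: trunc_coords_def)
  qed
  then have "continuous_on UNIV (\<lambda>x. f (trunc_coords n (\<lambda>i. g i x)))"
    by (rule continuous_on_compose2[OF assms(2)]) auto
  moreover have "f (\<lambda>i. g i x) = f (trunc_coords n (\<lambda>i. g i x))" for x
    using assms(1) unfolding depends_on_first_def by blast
  ultimately show ?thesis by simp
qed

lemma Ck_compose:
  assumes "depends_on_first n f" "Ck k n f" "\<And>i. i < n \<Longrightarrow> Ck k m (g i)"
  shows "Ck k m (\<lambda>x. f (\<lambda>i. g i x))"
  using assms
proof (induction k arbitrary: f)
  case 0 then show ?case using continuous_on_compose_first[of n f g] by simp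
next
  case (Suc k)
  show ?case
  proof (rule Ck_SucI[where D="\<lambda>j x. \<Sum>i<n. partial_deriv i f (\<lambda>l. g l x) * partial_deriv j (g i) x"])
    show "continuous_on UNIV (\<lambda>x. f (\<lambda>i. g i x))"
      using continuous_on_compose_first[of n f g] Suc.prems Ck_imp_continuous by blast
  next
    fix j x s assume "j < m"
    show "((\<lambda>t. f (\<lambda>i. g i (x(j := t)))) has_real_derivative
        (\<Sum>i<n. partial_deriv i f (\<lambda>l. g l (x(j := s))) * partial_deriv j (g i) (x(j := s)))) (at s)"
      by (rule Ck_chain_rule[OF Suc.prems(2,1), where \<gamma>="\<lambda>t i. g i (x(j := t))", simplified])
         (rule Ck_partial_DERIV[OF Suc.prems(3) \<open>j < m\<close>])
  next
    fix j assume "j < m"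
    show "Ck k m (\<lambda>x. \<Sum>i<n. partial_deriv i f (\<lambda>l. g l x) * partial_deriv j (g i) x)"
    proof (intro Ck_sum Ck_mult)
      fix i assume "i \<in> {..<n}"
      then have i: "i < n" by simp
      show "Ck k m (\<lambda>x. partial_deriv i f (\<lambda>l. g l x))"
      proof (rule Suc.IH)
        show "depends_on_first n (partial_deriv i f)"
          using depends_on_first_partial_deriv Suc.prems(1) i by blast
        show "Ck k n (partial_deriv i f)" using Suc.prems(2) i by (rule Ck_Suc_partial_deriv)
        show "Ck k m (g l)" if "l < n" for l using Suc.prems(3)[OF that] by (rule Ck_Suc_imp_Ck)
      qed
      show "Ck k m (partial_deriv j (g i))"
        using Suc.prems(3)[OF i] \<open>j < m\<close> by (rule Ck_Suc_partial_deriv)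
    qed
  qed
qed

lemma depends_on_first_combine:
  "depends_on_first n f \<Longrightarrow> depends_on_first n g \<Longrightarrow> depends_on_first n (\<lambda>x. F (f x) (g x))"
  unfolding depends_on_first_def by (intro allI arg_cong2[where f=F]) blast+

lemma smooth_fun_compose:
  assumes "smooth_fun n f" "\<And>i. i < n \<Longrightarrow> smooth_fun m (g i)"
  shows "smooth_fun m (\<lambda>x. f (\<lambda>i. g i x))"
  unfolding smooth_fun_iff
proof (intro conjI allI)
  fix k show "Ck k m (\<lambda>x. f (\<lambda>i. g i x))"
    using Ck_compose[of n f k m g] assms unfolding smooth_fun_iff by blast
next
  show "depends_on_first m (\<lambda>x. f (\<lambda>i. g i x))"
    unfolding depends_on_first_def
  proof
    fix x
    have "g i x = g i (trunc_coords m x)" if "i < n" for i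
      using assms(2)[OF that] unfolding smooth_fun_iff depends_on_first_def by blast
    then have "trunc_coords n (\<lambda>i. g i x) = trunc_coords n (\<lambda>i. g i (trunc_coords m x))"
      unfolding trunc_coords_def by auto
    then show "f (\<lambda>i. g i x) = f (\<lambda>i. g i (trunc_coords m x))"
      using assms(1) unfolding smooth_fun_iff depends_on_first_def by metis
  qed
qed

lemma smooth_fun_const: "smooth_fun n (\<lambda>_. c)"
  by (simp add: smooth_fun_iff depends_on_first_def Ck_const)

lemma smooth_fun_proj: "i < n \<Longrightarrow> smooth_fun n (\<lambda>x. x i)"
  by (simp add: smooth_fun_iff depends_on_first_def Ck_proj trunc_coords_def)

lemma smooth_fun_add: "smooth_fun n f \<Longrightarrow> smooth_fun n g \<Longrightarrow> smooth_fun n (\<lambda>x. f x + g x)"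
  unfolding smooth_fun_iff using depends_on_first_combine[of n f g "(+)"] Ck_add by blast

lemma smooth_fun_mult: "smooth_fun n f \<Longrightarrow> smooth_fun n g \<Longrightarrow> smooth_fun n (\<lambda>x. f x * g x)"
  unfolding smooth_fun_iff using depends_on_first_combine[of n f g "(*)"] Ck_mult by blast

lemma smooth_fun_inverse: "smooth_fun n f \<Longrightarrow> (\<And>x. f x \<noteq> 0) \<Longrightarrow> smooth_fun n (\<lambda>x. inverse (f x))"
  unfolding smooth_fun_iff using depends_on_first_combine[of n f f "\<lambda>u _. inverse u"] Ck_inverse by blast

lemma smooth_fun_sum: "(\<And>j. j \<in> J \<Longrightarrow> smooth_fun n (f j)) \<Longrightarrow> smooth_fun n (\<lambda>x. \<Sum>j\<in>J. f j x)"
  by (induction J rule: infinite_finite_induct) (simp_all add: smooth_fun_const smooth_fun_add)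

lemma smooth_fun_minus: "smooth_fun n f \<Longrightarrow> smooth_fun n (\<lambda>x. - f x)"
  using smooth_fun_mult[OF smooth_fun_const, of n f "-1"] by simp

lemma smooth_fun_diff: "smooth_fun n f \<Longrightarrow> smooth_fun n g \<Longrightarrow> smooth_fun n (\<lambda>x. f x - g x)"
  using smooth_fun_add[OF _ smooth_fun_minus] by simp

lemma smooth_fun_power: "smooth_fun n f \<Longrightarrow> smooth_fun n (\<lambda>x. f x ^ r)"
  by (induction r) (simp_all add: smooth_fun_const smooth_fun_mult)

lemma smooth_fun_divide:
  "smooth_fun n f \<Longrightarrow> smooth_fun n g \<Longrightarrow> (\<And>x. g x \<noteq> 0) \<Longrightarrow> smooth_fun n (\<lambda>x. f x / g x)"
  using smooth_fun_mult[OF _ smooth_fun_inverse] by (simp add: divide_inverse)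

lemma smooth_fun_continuous: "smooth_fun n f \<Longrightarrow> continuous_on UNIV f"
  using Ck_imp_continuous by (auto simp: smooth_fun_iff)

lemma continuous_cube_nbhd:
  assumes "depends_on_first n f" "continuous_on UNIV f" "\<epsilon> > 0"
  shows "\<exists>\<delta>>0. \<forall>x. (\<forall>i<n. \<bar>x i - c i\<bar> < \<delta>) \<longrightarrow> \<bar>f x - f c\<bar> < \<epsilon>"
proof (rule ccontr)
  assume "\<not> ?thesis"
  moreover have "1 / real (Suc k) > 0" for k by simp
  ultimately have "\<exists>x. (\<forall>i<n. \<bar>x i - c i\<bar> < 1 / real (Suc k)) \<and> \<not> \<bar>f x - f c\<bar> < \<epsilon>" for k
    by blast
  then obtain X where X: "\<And>k i. i < n \<Longrightarrow> \<bar>X k i - c i\<bar> < 1 / real (Suc k)"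
    and far: "\<And>k. \<not> \<bar>f (X k) - f c\<bar> < \<epsilon>" by metis
  have "(\<lambda>k. trunc_coords n (X k)) \<longlonglongrightarrow> trunc_coords n c"
  proof (rule tendsto_coordinatewise)
    fix i
    show "(\<lambda>k. trunc_coords n (X k) i) \<longlonglongrightarrow> trunc_coords n c i"
    proof (cases "i < n")
      case True
      have "(\<lambda>k. 1 / real (Suc k)) \<longlonglongrightarrow> 0"
        using LIMSEQ_inverse_real_of_nat by (simp add: inverse_eq_divide)
      then have "(\<lambda>k. X k i - c i) \<longlonglongrightarrow> 0"
        by (rule Lim_null_comparison[rotated]) (use X[OF True] less_imp_le in \<open>auto intro!: always_eventually\<close>)
      then show ?thesis using True by (simp add: trunc_coords_def LIM_zero_iff)
    next
      case False then show ?thesis by (simp add: trunc_coords_def)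
    qed
  qed
  moreover have "isCont f (trunc_coords n c)"
    using assms(2) by (simp add: continuous_on_eq_continuous_at)
  ultimately have "(\<lambda>k. f (trunc_coords n (X k))) \<longlonglongrightarrow> f (trunc_coords n c)"
    by (rule isCont_tendsto_compose[rotated])
  moreover have "f (trunc_coords n x) = f x" for x
    using assms(1) unfolding depends_on_first_def by metis
  ultimately have "(\<lambda>k. f (X k)) \<longlonglongrightarrow> f c"
    by (simp only:)
  then obtain N where "\<And>k. k \<ge> N \<Longrightarrow> dist (f (X k)) (f c) < \<epsilon>"
    using assms(3) unfolding lim_sequentially by blast
  then show False using far[of N] by (simp add: dist_real_def)
qed

section \<open>Smooth functions of one variable\<close>

definition smooth_real :: "(real \<Rightarrow> real) \<Rightarrow> bool" where
  "smooth_real g \<longleftrightarrow> (\<forall>k x. ((deriv ^^ k) g) differentiable (at x))"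

lemma smooth_real_differentiable: "smooth_real g \<Longrightarrow> g differentiable (at x)"
  unfolding smooth_real_def by (metis funpow_0)

lemma smooth_real_deriv: "smooth_real g \<Longrightarrow> smooth_real (deriv g)"
  unfolding smooth_real_def by (metis funpow_Suc_right o_apply)

lemma smooth_real_deriv_iterate: "smooth_real g \<Longrightarrow> smooth_real ((deriv ^^ k) g)"
  unfolding smooth_real_def by (metis funpow_add o_apply)

lemma smooth_real_continuous: "smooth_real g \<Longrightarrow> continuous_on UNIV g"
  using smooth_real_differentiable
  by (intro continuous_at_imp_continuous_on ballI differentiable_imp_continuous_within) blast

lemma smooth_real_Ck: assumes "smooth_real g" shows "Ck k 1 (\<lambda>x. (deriv ^^ j) g (x 0))"
proof (induction k arbitrary: j)
  case 0
  show ?case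
    using continuous_on_compose2[OF smooth_real_continuous[OF smooth_real_deriv_iterate[OF assms]]
        continuous_on_product_coordinates[of 0]] by simp
next
  case (Suc k)
  show ?case
  proof (rule Ck_SucI[where D="\<lambda>i x. (deriv ^^ Suc j) g (x 0)"])
    show "continuous_on UNIV (\<lambda>x::nat \<Rightarrow> real. (deriv ^^ j) g (x 0))"
      using Suc.IH[of j] by (rule Ck_imp_continuous)
  next
    fix i x s assume "i < (1::nat)"
    have "((deriv ^^ j) g has_real_derivative deriv ((deriv ^^ j) g) s) (at s)"
      using assms unfolding smooth_real_def by (simp add: DERIV_deriv_iff_real_differentiable)
    then show "((\<lambda>t. (deriv ^^ j) g ((x(i := t)) 0)) has_real_derivative (deriv ^^ Suc j) g ((x(i := s)) 0)) (at s)"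
      using \<open>i < 1\<close> by simp
  qed (rule Suc.IH)
qed

lemma Ck_one_var_differentiable:
  "Ck (Suc k) 1 (\<lambda>x. g (x 0)) \<Longrightarrow> ((deriv ^^ k) g) differentiable (at s)"
proof (induction k arbitrary: g)
  case 0
  have "\<forall>i<(1::nat). \<forall>x::nat \<Rightarrow> real. (\<lambda>t. g ((x(i := t)) 0)) differentiable (at (x i))"
    using Ck_Suc_iff[THEN iffD1, OF "0"] by (elim conjE)
  then have "(\<lambda>t. g (((\<lambda>_. s)(0 := t)) 0)) differentiable (at ((\<lambda>_. s) 0))"
    by (elim allE[of _ 0] impE allE[of _ "\<lambda>_. s"]) simp_all
  then show ?case by simp
next
  case (Suc k)
  have "partial_deriv 0 (\<lambda>x. g (x 0)) = (\<lambda>x. deriv g (x 0))"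
    by (simp add: partial_deriv_def)
  then have "Ck (Suc k) 1 (\<lambda>x. deriv g (x 0))"
    using Ck_Suc_partial_deriv[OF Suc.prems, of 0] by simp
  then have "((deriv ^^ k) (deriv g)) differentiable (at s)" by (rule Suc.IH)
  then show ?case by (simp add: funpow_Suc_right del: funpow.simps)
qed

lemma smooth_real_imp_smooth_fun: "smooth_real g \<Longrightarrow> smooth_fun 1 (\<lambda>x. g (x 0))"
  using smooth_real_Ck[of g _ 0] by (simp add: smooth_fun_def)

lemma smooth_fun_imp_smooth_real: "smooth_fun 1 (\<lambda>x. g (x 0)) \<Longrightarrow> smooth_real g"
  unfolding smooth_real_def smooth_fun_def using Ck_one_var_differentiable by blast

lemma CinfR_iff_smooth_real: "g \<in> CinfR \<longleftrightarrow> smooth_real g"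
  unfolding CinfR_def using smooth_real_imp_smooth_fun smooth_fun_imp_smooth_real by blast

lemma smooth_fun_compose_real: "smooth_real F \<Longrightarrow> smooth_fun n G \<Longrightarrow> smooth_fun n (\<lambda>x. F (G x))"
  using smooth_fun_compose[of 1 "\<lambda>y. F (y 0)" n "\<lambda>_. G"] smooth_real_imp_smooth_fun by simp

definition flat :: "real \<Rightarrow> real" where
  "flat t = (if t \<le> 0 then 0 else exp (- (1 / t)))"

lemma flat_pos: "t > 0 \<Longrightarrow> flat t > 0" and flat_zero: "t \<le> 0 \<Longrightarrow> flat t = 0"
  and flat_nonneg: "flat t \<ge> 0"
  by (auto simp: flat_def)

lemma poly_inverse_exp_tendsto_0:
  "((\<lambda>t. poly p (1 / t) * exp (- (1 / t))) \<longlongrightarrow> 0) (at_right (0::real))"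
proof -
  have "((\<lambda>u. \<Sum>i\<le>degree p. coeff p i * (u ^ i / exp u)) \<longlongrightarrow> (\<Sum>i\<le>degree p. coeff p i * 0)) at_top"
    by (intro tendsto_intros tendsto_power_div_exp_0)
  moreover have "poly p u * exp (- u) = (\<Sum>i\<le>degree p. coeff p i * (u ^ i / exp u))" for u
    by (simp add: poly_altdef exp_minus field_simps sum_divide_distrib)
  ultimately have "((\<lambda>u. poly p u * exp (- u)) \<longlongrightarrow> 0) at_top"
    by simp
  moreover have "filterlim (\<lambda>t::real. 1 / t) at_top (at_right 0)"
    using filterlim_inverse_at_top_right by (simp add: inverse_eq_divide)
  ultimately show ?thesis by (rule filterlim_compose)
qed

lemma flat_type_DERIV_0:
  fixes p :: "real poly"
  defines "h \<equiv> \<lambda>t. if t \<le> 0 then 0 else poly p (1 / t) * exp (- (1 / t))"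
  shows "(h has_real_derivative 0) (at 0)"
proof -
  have "((\<lambda>t. (h t - h 0) / (t - 0)) \<longlongrightarrow> 0) (at_left 0)"
  proof (rule Lim_transform_eventually[OF tendsto_const])
    show "\<forall>\<^sub>F t in at_left 0. 0 = (h t - h 0) / (t - 0)"
      unfolding eventually_at_left_field by (intro exI[of _ "-1"]) (auto simp: h_def)
  qed
  moreover have "((\<lambda>t. (h t - h 0) / (t - 0)) \<longlongrightarrow> 0) (at_right 0)"
  proof (rule Lim_transform_eventually[OF poly_inverse_exp_tendsto_0[of "[:0, 1:] * p"]])
    show "\<forall>\<^sub>F t in at_right 0. poly ([:0, 1:] * p) (1 / t) * exp (- (1 / t)) = (h t - h 0) / (t - 0)"
      unfolding eventually_at_right_field by (intro exI[of _ 1]) (auto simp: h_def)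
  qed
  ultimately show ?thesis
    by (simp only: has_field_derivative_iff filterlim_at_split)
qed

lemma flat_type_DERIV:
  fixes p :: "real poly"
  defines "h \<equiv> \<lambda>t. if t \<le> 0 then 0 else poly p (1 / t) * exp (- (1 / t))"
  defines "q \<equiv> [:0, 0, 1:] * (p - pderiv p)"
  shows "(h has_real_derivative (if s \<le> 0 then 0 else poly q (1 / s) * exp (- (1 / s)))) (at s)"
proof (cases s "0::real" rule: linorder_cases)
  case less
  have "(h has_real_derivative 0) (at s)"
    by (rule has_field_derivative_transform_within_open[OF DERIV_const, where S="{..<0}"])
       (use less in \<open>auto simp: h_def\<close>)
  then show ?thesis using less by simp
next
  case greater
  have d: "((\<lambda>t. 1 / t) has_real_derivative - ((1 / s) ^ 2)) (at s)"
    using DERIV_inverse[of s] greater by (simp add: inverse_eq_divide power2_eq_square)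
  have "((\<lambda>t. poly p (1 / t) * exp (- (1 / t))) has_real_derivative
      poly (pderiv p) (1 / s) * - ((1 / s) ^ 2) * exp (- (1 / s)) +
      exp (- (1 / s)) * - (- ((1 / s) ^ 2)) * poly p (1 / s)) (at s)"
    by (rule DERIV_mult[OF DERIV_chain2[OF poly_DERIV d] DERIV_chain2[OF DERIV_exp DERIV_minus[OF d]]])
  moreover have "poly (pderiv p) u * - (u ^ 2) * e + e * - (- (u ^ 2)) * poly p u = poly q u * e" for u e
    by (simp add: q_def algebra_simps power2_eq_square)
  ultimately have "((\<lambda>t. poly p (1 / t) * exp (- (1 / t))) has_real_derivative
      poly q (1 / s) * exp (- (1 / s))) (at s)"
    by simp
  then have "(h has_real_derivative poly q (1 / s) * exp (- (1 / s))) (at s)"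
    by (rule has_field_derivative_transform_within_open[where S="{0<..}"])
       (use greater in \<open>auto simp: h_def\<close>)
  then show ?thesis using greater by simp
next
  case equal
  then show ?thesis using flat_type_DERIV_0[of p] by (simp add: h_def)
qed

lemma deriv_iterate_flat:
  "\<exists>p. (deriv ^^ k) flat = (\<lambda>t. if t \<le> 0 then 0 else poly p (1 / t) * exp (- (1 / t)))"
proof (induction k)
  case 0
  show ?case by (intro exI[of _ 1]) (simp add: flat_def fun_eq_iff)
next
  case (Suc k)
  then obtain p where p: "(deriv ^^ k) flat = (\<lambda>t. if t \<le> 0 then 0 else poly p (1 / t) * exp (- (1 / t)))"
    by blast
  have "(deriv ^^ Suc k) flat = deriv ((deriv ^^ k) flat)" by simp
  also have "\<dots> = (\<lambda>t. if t \<le> 0 then 0 else poly ([:0, 0, 1:] * (p - pderiv p)) (1 / t) * exp (- (1 / t)))"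
    unfolding p by (rule ext, rule DERIV_imp_deriv, rule flat_type_DERIV)
  finally show ?case by blast
qed

lemma smooth_real_flat: "smooth_real flat"
  unfolding smooth_real_def
proof (intro allI)
  fix k x
  obtain p where p: "(deriv ^^ k) flat = (\<lambda>t. if t \<le> 0 then 0 else poly p (1 / t) * exp (- (1 / t)))"
    using deriv_iterate_flat by blast
  show "(deriv ^^ k) flat differentiable at x"
    unfolding p using flat_type_DERIV real_differentiable_def by blast
qed

lemma smooth_fun_flat: "smooth_fun n G \<Longrightarrow> smooth_fun n (\<lambda>x. flat (G x))"
  by (rule smooth_fun_compose_real[OF smooth_real_flat])

lemmas smooth_fun_intros = smooth_fun_add smooth_fun_mult smooth_fun_diff smooth_fun_minus
  smooth_fun_power smooth_fun_const smooth_fun_proj smooth_fun_sum smooth_fun_flat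

text \<open>The quotient in Hadamard's lemma is smooth: differentiating under the integral sign raises
  the weight \<open>\<tau>\<^sup>j\<close> by one each time.\<close>

definition hadamard_integral :: "real \<Rightarrow> nat \<Rightarrow> (real \<Rightarrow> real) \<Rightarrow> real \<Rightarrow> real" where
  "hadamard_integral c j h s = integral {0..1} (\<lambda>\<tau>. \<tau> ^ j * h (c + \<tau> * (s - c)))"

lemma hadamard_integral_DERIV:
  assumes "smooth_real h"
  shows "(hadamard_integral c j h has_real_derivative hadamard_integral c (Suc j) (deriv h) s) (at s)"
proof -
  have ch: "continuous_on UNIV h" and cd: "continuous_on UNIV (deriv h)"
    using assms smooth_real_continuous smooth_real_deriv by blast+
  have "((\<lambda>x. integral (cbox 0 1) (\<lambda>\<tau>. \<tau> ^ j * h (c + \<tau> * (x - c)))) has_field_derivative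
      integral (cbox 0 1) (\<lambda>\<tau>. \<tau> ^ Suc j * deriv h (c + \<tau> * (s - c)))) (at s within UNIV)"
  proof (rule leibniz_rule_field_derivative)
    fix x t :: real
    have "(h has_real_derivative deriv h (c + t * (x - c))) (at (c + t * (x - c)))"
      using smooth_real_differentiable[OF assms] by (simp add: DERIV_deriv_iff_real_differentiable)
    then have "((\<lambda>x. h (c + t * (x - c))) has_real_derivative deriv h (c + t * (x - c)) * (0 + t * (1 - 0))) (at x)"
      by (rule DERIV_chain2) (auto intro!: derivative_eq_intros)
    then have "((\<lambda>x. t ^ j * h (c + t * (x - c))) has_real_derivative t ^ j * (deriv h (c + t * (x - c)) * (0 + t * (1 - 0)))) (at x)"
      by (rule DERIV_cmult)
    then show "((\<lambda>x. t ^ j * h (c + t * (x - c))) has_real_derivative t ^ Suc j * deriv h (c + t * (x - c))) (at x within UNIV)"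
      by (simp add: algebra_simps)
  next
    fix x :: real
    have "continuous_on {0..1} (\<lambda>t. t ^ j * h (c + t * (x - c)))"
      by (intro continuous_intros continuous_on_compose2[OF ch]) auto
    then show "(\<lambda>t. t ^ j * h (c + t * (x - c))) integrable_on cbox 0 1"
      by (simp add: integrable_continuous_interval)
  next
    show "continuous_on (UNIV \<times> cbox 0 1) (\<lambda>(x, t). t ^ Suc j * deriv h (c + t * (x - c)))"
      by (simp add: split_beta, intro continuous_intros continuous_on_compose2[OF cd]) auto
  qed auto
  then show ?thesis by (simp add: hadamard_integral_def[abs_def])
qed

lemma deriv_iterate_hadamard_integral:
  assumes "smooth_real h"
  shows "(deriv ^^ k) (hadamard_integral c j h) = hadamard_integral c (j + k) ((deriv ^^ k) h)"
proof (induction k arbitrary: j)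
  case 0 then show ?case by simp
next
  case (Suc k)
  have "(deriv ^^ Suc k) (hadamard_integral c j h) = deriv (hadamard_integral c (j + k) ((deriv ^^ k) h))"
    using Suc by simp
  also have "\<dots> = hadamard_integral c (Suc (j + k)) (deriv ((deriv ^^ k) h))"
    by (rule ext, rule DERIV_imp_deriv, rule hadamard_integral_DERIV[OF smooth_real_deriv_iterate[OF assms]])
  finally show ?case by simp
qed

lemma smooth_real_hadamard_integral:
  assumes "smooth_real h" shows "smooth_real (hadamard_integral c j h)"
  unfolding smooth_real_def
proof (intro allI)
  fix k x
  show "(deriv ^^ k) (hadamard_integral c j h) differentiable (at x)"
    unfolding deriv_iterate_hadamard_integral[OF assms]
    using hadamard_integral_DERIV[OF smooth_real_deriv_iterate[OF assms]] real_differentiable_def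
    by blast
qed

lemma hadamard_lemma:
  assumes "smooth_real g"
  shows "g s = g c + (s - c) * hadamard_integral c 0 (deriv g) s"
proof -
  have "((\<lambda>\<tau>. (s - c) * deriv g (c + \<tau> * (s - c))) has_integral
      (g (c + 1 * (s - c)) - g (c + 0 * (s - c)))) {0..1}"
  proof (rule fundamental_theorem_of_calculus)
    fix x :: real
    have "(g has_real_derivative deriv g (c + x * (s - c))) (at (c + x * (s - c)))"
      using smooth_real_differentiable[OF assms] by (simp add: DERIV_deriv_iff_real_differentiable)
    then have "((\<lambda>\<tau>. g (c + \<tau> * (s - c))) has_real_derivative deriv g (c + x * (s - c)) * (0 + 1 * (s - c))) (at x)"
      by (rule DERIV_chain2) (auto intro!: derivative_eq_intros)
    then have "((\<lambda>\<tau>. g (c + \<tau> * (s - c))) has_real_derivative (s - c) * deriv g (c + x * (s - c)))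
        (at x within {0..1})"
      by (simp add: has_field_derivative_at_within mult.commute)
    then show "((\<lambda>\<tau>. g (c + \<tau> * (s - c))) has_vector_derivative (s - c) * deriv g (c + x * (s - c)))
        (at x within {0..1})"
      by (simp add: has_real_derivative_iff_has_vector_derivative)
  qed simp
  then have "((\<lambda>\<tau>. (s - c) * deriv g (c + \<tau> * (s - c))) has_integral (g s - g c)) {0..1}"
    by simp
  then have "integral {0..1} (\<lambda>\<tau>. (s - c) * deriv g (c + \<tau> * (s - c))) = g s - g c"
    by (rule integral_unique)
  then show ?thesis by (simp add: hadamard_integral_def)
qed

lemma deriv_zero_on_nonneg:
  assumes "smooth_real g" "\<And>t. t \<ge> 0 \<Longrightarrow> g t = 0" "p \<ge> 0"
  shows "deriv g p = 0"
proof -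
  have pos: "deriv g q = 0" if "q > 0" for q
  proof -
    have "(g has_real_derivative 0) (at q)"
      by (rule has_field_derivative_transform_within_open[OF DERIV_const, where S="{0<..}"])
         (use that assms(2) in auto)
    then show ?thesis by (rule DERIV_imp_deriv)
  qed
  show ?thesis
  proof (cases "p > 0")
    case True then show ?thesis by (rule pos)
  next
    case False
    then have p0: "p = 0" using assms(3) by simp
    have "isCont (deriv g) 0"
      using smooth_real_continuous[OF smooth_real_deriv[OF assms(1)]]
      by (simp add: continuous_on_eq_continuous_at)
    then have "(deriv g \<longlongrightarrow> deriv g 0) (at_right 0)"
      by (simp add: isCont_def filterlim_at_split)
    moreover have "eventually (\<lambda>q. 0 = deriv g q) (at_right (0::real))"
      unfolding eventually_at_right_field by (intro exI[of _ 1]) (auto, metis pos)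
    then have "(deriv g \<longlongrightarrow> 0) (at_right (0::real))"
      by (rule Lim_transform_eventually[OF tendsto_const])
    ultimately show ?thesis using p0 by (auto intro: tendsto_unique[OF trivial_limit_at_right_real])
  qed
qed

lemma hadamard_vanishing_on_nonneg:
  assumes "smooth_real g" "\<And>t. t \<ge> 0 \<Longrightarrow> g t = 0" "c \<ge> 0"
  shows "\<exists>e. smooth_real e \<and> (\<forall>t\<ge>0. e t = 0) \<and> (\<forall>s. g s = (s - c) * e s)"
proof (intro exI conjI allI impI)
  show "smooth_real (hadamard_integral c 0 (deriv g))"
    by (rule smooth_real_hadamard_integral[OF smooth_real_deriv[OF assms(1)]])
  show "g s = (s - c) * hadamard_integral c 0 (deriv g) s" for s
    using hadamard_lemma[OF assms(1), of s c] assms(2)[OF assms(3)] by simp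
  fix t :: real assume "t \<ge> 0"
  have zero: "deriv g (c + \<tau> * (t - c)) = 0" if "\<tau> \<in> {0..1}" for \<tau>
  proof (rule deriv_zero_on_nonneg[OF assms(1,2)])
    have "c + \<tau> * (t - c) = (1 - \<tau>) * c + \<tau> * t" by (simp add: algebra_simps)
    also have "\<dots> \<ge> 0" using that \<open>t \<ge> 0\<close> assms(3) by (auto intro!: add_nonneg_nonneg mult_nonneg_nonneg)
    finally show "c + \<tau> * (t - c) \<ge> 0" .
  qed
  have "integral {0..1} (\<lambda>\<tau>. \<tau> ^ 0 * deriv g (c + \<tau> * (t - c))) = integral {0..1} (\<lambda>_::real. 0::real)"
    by (intro Henstock_Kurzweil_Integration.integral_cong) (simp add: zero)
  then show "hadamard_integral c 0 (deriv g) t = 0"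
    unfolding hadamard_integral_def by simp
qed

lemma hadamard_vanishing_on_nonneg_power:
  assumes "smooth_real g" "\<And>t. t \<ge> 0 \<Longrightarrow> g t = 0" "c \<ge> 0"
  shows "\<exists>e. smooth_real e \<and> (\<forall>t\<ge>0. e t = 0) \<and> (\<forall>s. g s = (s - c) ^ r * e s)"
proof (induction r)
  case 0 then show ?case using assms by auto
next
  case (Suc r)
  then obtain e where e: "smooth_real e" "\<forall>t\<ge>0. e t = 0" "\<forall>s. g s = (s - c) ^ r * e s" by blast
  obtain e' where "smooth_real e'" "\<forall>t\<ge>0. e' t = 0" "\<forall>s. e s = (s - c) * e' s"
    using hadamard_vanishing_on_nonneg[OF e(1) _ assms(3)] e(2) by blast
  then show ?case using e(3) by (intro exI[of _ e'] conjI) simp_all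
qed

section \<open>Elementary identities in \<open>C\<^sup>\<infinity>\<close>-rings\<close>

lemma cinf_ring_closed:
  assumes "cinf_ring A \<Phi>" "smooth_fun n f" "\<And>i. i < n \<Longrightarrow> a i \<in> A"
  shows "\<Phi> n f a \<in> A"
proof -
  have "\<forall>n f a. smooth_fun n f \<and> (\<forall>i<n. a i \<in> A) \<longrightarrow> \<Phi> n f a \<in> A"
    using assms(1) unfolding cinf_ring_def by (elim conjE)
  then show ?thesis using assms(2,3) by blast
qed

lemma cinf_ring_local:
  assumes "cinf_ring A \<Phi>" "smooth_fun n f" "\<And>i. i < n \<Longrightarrow> a i = b i"
  shows "\<Phi> n f a = \<Phi> n f b"
proof -
  have "\<forall>n f a b. smooth_fun n f \<and> (\<forall>i<n. a i = b i) \<longrightarrow> \<Phi> n f a = \<Phi> n f b"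
    using assms(1) unfolding cinf_ring_def by (elim conjE)
  then show ?thesis using assms(2,3) by blast
qed

lemma cinf_ring_proj:
  assumes "cinf_ring A \<Phi>" "i < n" "\<And>j. j < n \<Longrightarrow> a j \<in> A"
  shows "\<Phi> n (\<lambda>x. x i) a = a i"
proof -
  have "\<forall>n i a. i < n \<and> (\<forall>j<n. a j \<in> A) \<longrightarrow> \<Phi> n (\<lambda>x. x i) a = a i"
    using assms(1) unfolding cinf_ring_def by (elim conjE)
  then show ?thesis using assms(2,3) by blast
qed

lemma cinf_ring_compose:
  assumes "cinf_ring A \<Phi>" "smooth_fun n f" "\<And>i. i < n \<Longrightarrow> smooth_fun m (g i)" "\<And>j. j < m \<Longrightarrow> a j \<in> A"
  shows "\<Phi> n f (\<lambda>i. \<Phi> m (g i) a) = \<Phi> m (\<lambda>x. f (\<lambda>i. g i x)) a"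
proof -
  have "\<forall>n m f g a. smooth_fun n f \<and> (\<forall>i<n. smooth_fun m (g i)) \<and> (\<forall>j<m. a j \<in> A) \<longrightarrow>
        \<Phi> n f (\<lambda>i. \<Phi> m (g i) a) = \<Phi> m (\<lambda>x. f (\<lambda>i. g i x)) a"
    using assms(1) unfolding cinf_ring_def by (elim conjE)
  then show ?thesis using assms(2-4) by blast
qed

lemma cinf_ring_compose1:
  assumes "cinf_ring A \<Phi>" "smooth_fun 1 (\<lambda>y. F (y 0))" "smooth_fun m G" "\<And>j. j < m \<Longrightarrow> a j \<in> A"
  shows "\<Phi> 1 (\<lambda>y. F (y 0)) (\<lambda>_. \<Phi> m G a) = \<Phi> m (\<lambda>x. F (G x)) a"
  using cinf_ring_compose[OF assms(1,2), of m "\<lambda>_. G" a] assms(3,4) by simp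

lemma cinf_ring_compose2:
  assumes "cinf_ring A \<Phi>" "smooth_fun 2 (\<lambda>y. H (y 0) (y 1))" "smooth_fun m F" "smooth_fun m G"
    and "\<And>j. j < m \<Longrightarrow> a j \<in> A"
  shows "\<Phi> 2 (\<lambda>y. H (y 0) (y 1)) (\<lambda>i. if i = 0 then \<Phi> m F a else \<Phi> m G a) = \<Phi> m (\<lambda>x. H (F x) (G x)) a"
proof -
  have args: "(\<lambda>i. \<Phi> m (if i = 0 then F else G) a) = (\<lambda>i. if i = 0 then \<Phi> m F a else \<Phi> m G a)"
    by auto
  have "\<Phi> 2 (\<lambda>y. H (y 0) (y 1)) (\<lambda>i. \<Phi> m (if i = 0 then F else G) a) = \<Phi> m (\<lambda>x. H (F x) (G x)) a"
    using cinf_ring_compose[OF assms(1,2), of m "\<lambda>i. if i = 0 then F else G" a] assms(3-5) by simp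
  then show ?thesis unfolding args .
qed

lemma cinf_ring_cong2:
  assumes R: "cinf_ring A \<Phi>" and H: "smooth_fun 2 (\<lambda>y. H (y 0) (y 1))"
    and F: "smooth_fun m F" "smooth_fun m F'" and G: "smooth_fun m G" "smooth_fun m G'"
    and a: "\<And>j. j < m \<Longrightarrow> a j \<in> A" and "\<Phi> m F a = \<Phi> m F' a" "\<Phi> m G a = \<Phi> m G' a"
  shows "\<Phi> m (\<lambda>x. H (F x) (G x)) a = \<Phi> m (\<lambda>x. H (F' x) (G' x)) a"
proof -
  have "\<Phi> m (\<lambda>x. H (F x) (G x)) a = \<Phi> 2 (\<lambda>y. H (y 0) (y 1)) (\<lambda>i. if i = 0 then \<Phi> m F a else \<Phi> m G a)"
    using cinf_ring_compose2[OF R H F(1) G(1) a] by (rule sym)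
  also have "\<dots> = \<Phi> 2 (\<lambda>y. H (y 0) (y 1)) (\<lambda>i. if i = 0 then \<Phi> m F' a else \<Phi> m G' a)"
    by (simp only: assms(8,9))
  also have "\<dots> = \<Phi> m (\<lambda>x. H (F' x) (G' x)) a"
    by (rule cinf_ring_compose2[OF R H F(2) G(2) a])
  finally show ?thesis .
qed

lemma cinf_ring_const:
  assumes R: "cinf_ring A \<Phi>" and a: "\<And>j. j < m \<Longrightarrow> a j \<in> A"
  shows "\<Phi> m (\<lambda>_. c) a = cconst \<Phi> c"
proof -
  have "\<Phi> 0 (\<lambda>_. c) (\<lambda>i. \<Phi> m (\<lambda>_. 0) a) = \<Phi> m (\<lambda>x. c) a"
    using cinf_ring_compose[OF R, of 0 "\<lambda>_. c" m "\<lambda>_ _. 0" a] a by (simp add: smooth_fun_const)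
  moreover have "\<Phi> 0 (\<lambda>_. c) (\<lambda>i. \<Phi> m (\<lambda>_. 0) a) = cconst \<Phi> c"
    unfolding cconst_def by (rule cinf_ring_local[OF R]) (auto simp: smooth_fun_const)
  ultimately show ?thesis by simp
qed

lemma cinf_ring_const1: "cinf_ring A \<Phi> \<Longrightarrow> y \<in> A \<Longrightarrow> \<Phi> 1 (\<lambda>_. c) (\<lambda>_. y) = cconst \<Phi> c"
  using cinf_ring_const[of A \<Phi> 1 "\<lambda>_. y" c] by simp

lemma cinf_ring_mult_zero_left:
  assumes R: "cinf_ring A \<Phi>" and F: "smooth_fun m F" and G: "smooth_fun m G"
    and a: "\<And>j. j < m \<Longrightarrow> a j \<in> A" and z: "\<Phi> m F a = cconst \<Phi> 0"
  shows "\<Phi> m (\<lambda>x. F x * G x) a = cconst \<Phi> 0"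
proof -
  have "smooth_fun 2 (\<lambda>y. y 0 * y 1)" by (intro smooth_fun_intros) auto
  then have "\<Phi> m (\<lambda>x. F x * G x) a = \<Phi> m (\<lambda>x. (\<lambda>_. 0) x * G x) a"
    by (rule cinf_ring_cong2[OF R _ F smooth_fun_const G G a]) (use z cinf_ring_const[OF R a] in auto)
  then show ?thesis using cinf_ring_const[OF R a] by simp
qed

lemma cinf_ring_mult_zero_right:
  assumes R: "cinf_ring A \<Phi>" and F: "smooth_fun m F" and G: "smooth_fun m G"
    and a: "\<And>j. j < m \<Longrightarrow> a j \<in> A" and z: "\<Phi> m G a = cconst \<Phi> 0"
  shows "\<Phi> m (\<lambda>x. F x * G x) a = cconst \<Phi> 0"
  using cinf_ring_mult_zero_left[OF R G F a z] by (simp add: mult.commute)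

lemma cinf_ring_add_zero:
  assumes R: "cinf_ring A \<Phi>" and F: "smooth_fun m F" and G: "smooth_fun m G"
    and a: "\<And>j. j < m \<Longrightarrow> a j \<in> A" and z: "\<Phi> m G a = cconst \<Phi> 0"
  shows "\<Phi> m (\<lambda>x. F x + G x) a = \<Phi> m F a"
proof -
  have "smooth_fun 2 (\<lambda>y. y 0 + y 1)" by (intro smooth_fun_intros) auto
  then have "\<Phi> m (\<lambda>x. F x + G x) a = \<Phi> m (\<lambda>x. F x + (\<lambda>_. 0) x) a"
    by (rule cinf_ring_cong2[OF R _ F F G smooth_fun_const a]) (use z cinf_ring_const[OF R a] in auto)
  then show ?thesis by simp
qed

lemma cinf_ring_sum_zero:
  assumes R: "cinf_ring A \<Phi>" and "finite I" and F: "\<And>i. i \<in> I \<Longrightarrow> smooth_fun m (F i)"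
    and a: "\<And>j. j < m \<Longrightarrow> a j \<in> A" and "\<And>i. i \<in> I \<Longrightarrow> \<Phi> m (F i) a = cconst \<Phi> 0"
  shows "\<Phi> m (\<lambda>x. \<Sum>i\<in>I. F i x) a = cconst \<Phi> 0"
  using assms(2,3,5)
proof (induction I rule: finite_induct)
  case empty then show ?case using cinf_ring_const[OF R a] by simp
next
  case (insert i I)
  have "\<Phi> m (\<lambda>x. \<Sum>i\<in>insert i I. F i x) a = \<Phi> m (\<lambda>x. (\<Sum>i\<in>I. F i x) + F i x) a"
    using insert.hyps by (simp add: add.commute)
  also have "\<dots> = \<Phi> m (\<lambda>x. \<Sum>i\<in>I. F i x) a"
    by (rule cinf_ring_add_zero[OF R smooth_fun_sum _ a]) (use insert.prems in auto)
  also have "\<dots> = cconst \<Phi> 0" using insert by auto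
  finally show ?case .
qed

lemma cconst_add_eq:
  assumes R: "cinf_ring A \<Phi>" and eq: "cconst \<Phi> c = cconst \<Phi> d"
  shows "cconst \<Phi> (c + e) = cconst \<Phi> (d + e)"
proof -
  have shift: "\<Phi> 1 (\<lambda>y. y 0 + e) (\<lambda>_. cconst \<Phi> c') = cconst \<Phi> (c' + e)" for c'
    unfolding cconst_def
    by (rule cinf_ring_compose1[OF R, of "\<lambda>s. s + e"]) (auto intro: smooth_fun_intros)
  show ?thesis using shift[of c] shift[of d] eq by simp
qed

lemma cinf_hom_closed: "cinf_hom A \<Phi> B \<Psi> h \<Longrightarrow> x \<in> A \<Longrightarrow> h x \<in> B"
  unfolding cinf_hom_def by blast

lemma cinf_hom_ops: "cinf_hom A \<Phi> B \<Psi> h \<Longrightarrow> smooth_fun n f \<Longrightarrow> (\<And>i. i < n \<Longrightarrow> a i \<in> A) \<Longrightarrow>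
    h (\<Phi> n f a) = \<Psi> n f (\<lambda>i. h (a i))"
  unfolding cinf_hom_def by blast

section \<open>Real parts in Weil algebras\<close>

definition nilpotent_at :: "'a cops \<Rightarrow> 'a \<Rightarrow> real \<Rightarrow> nat \<Rightarrow> bool" where
  "nilpotent_at \<Phi> w c r \<longleftrightarrow> \<Phi> 1 (\<lambda>x. (x 0 - c) ^ r) (\<lambda>_. w) = cconst \<Phi> 0"

lemma nilpotent_at_mono:
  assumes R: "cinf_ring A \<Phi>" and w: "w \<in> A" and n: "nilpotent_at \<Phi> w c r" and "r \<le> r'"
  shows "nilpotent_at \<Phi> w c r'"
proof -
  have "(\<lambda>x::nat\<Rightarrow>real. (x 0 - c) ^ r') = (\<lambda>x. (x 0 - c) ^ r * (x 0 - c) ^ (r' - r))"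
    using \<open>r \<le> r'\<close> by (simp add: power_add[symmetric])
  moreover have "\<Phi> 1 (\<lambda>x. (x 0 - c) ^ r * (x 0 - c) ^ (r' - r)) (\<lambda>_. w) = cconst \<Phi> 0"
    by (rule cinf_ring_mult_zero_left[OF R])
       (use n w in \<open>auto intro!: smooth_fun_intros simp: nilpotent_at_def\<close>)
  ultimately show ?thesis by (simp add: nilpotent_at_def)
qed

lemma weil_cinf_ring: "weil W \<Psi> \<Longrightarrow> cinf_ring W \<Psi>"
  by (simp add: weil_def)

lemma weil_nontrivial: "weil W \<Psi> \<Longrightarrow> cconst \<Psi> 0 \<noteq> cconst \<Psi> 1"
  by (simp add: weil_def)

lemma weil_ex_nilpotent_at:
  assumes "weil W \<Psi>" "w \<in> W" shows "\<exists>c r. nilpotent_at \<Psi> w c r"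
proof -
  have R: "cinf_ring W \<Psi>" using assms(1) by (rule weil_cinf_ring)
  have "\<forall>w\<in>W. \<exists>c m. m \<in> W \<and> (\<exists>r. \<Psi> 1 (\<lambda>x. x 0 ^ r) (\<lambda>_. m) = cconst \<Psi> 0) \<and>
                 w = \<Psi> 1 (\<lambda>x. c + x 0) (\<lambda>_. m)"
    using assms(1) unfolding weil_def by (elim conjE)
  then obtain c m r where m: "m \<in> W" "\<Psi> 1 (\<lambda>x. x 0 ^ r) (\<lambda>_. m) = cconst \<Psi> 0"
    "w = \<Psi> 1 (\<lambda>x. c + x 0) (\<lambda>_. m)" using assms(2) by blast
  have "\<Psi> 1 (\<lambda>y. (y 0 - c) ^ r) (\<lambda>_. \<Psi> 1 (\<lambda>x. c + x 0) (\<lambda>_. m)) = \<Psi> 1 (\<lambda>x. (c + x 0 - c) ^ r) (\<lambda>_. m)"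
    by (rule cinf_ring_compose1[OF R, of "\<lambda>s. (s - c) ^ r"]) (use m in \<open>auto intro!: smooth_fun_intros\<close>)
  then have "nilpotent_at \<Psi> w c r" using m by (simp add: nilpotent_at_def)
  then show ?thesis by blast
qed

lemma two_point_partition_of_unity:
  fixes s c c' :: real and N :: nat
  assumes "c \<noteq> c'"
  defines "h \<equiv> ((s - c) ^ 2) ^ N + ((s - c') ^ 2) ^ N"
  shows "h > 0" and "(s - c) ^ N * ((s - c) ^ N / h) + (s - c') ^ N * ((s - c') ^ N / h) = 1"
proof -
  have "((s - c) ^ 2) ^ N > 0 \<or> ((s - c') ^ 2) ^ N > 0"
    using assms(1) by (cases "s = c") simp_all
  moreover have "((s - c) ^ 2) ^ N \<ge> 0" "((s - c') ^ 2) ^ N \<ge> 0" by simp_all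
  ultimately show "h > 0" unfolding h_def by linarith
  have gen: "P * (P / H) + Q * (Q / H) = (P * P + Q * Q) / H" for P Q H :: real
    by (simp add: add_divide_distrib)
  have sq: "u ^ N * u ^ N = (u ^ 2) ^ N" for u :: real
    by (simp add: power2_eq_square power_mult_distrib)
  have "(s - c) ^ N * ((s - c) ^ N / h) + (s - c') ^ N * ((s - c') ^ N / h) = h / h"
    unfolding gen sq h_def by (rule refl)
  with \<open>h > 0\<close> show "(s - c) ^ N * ((s - c) ^ N / h) + (s - c') ^ N * ((s - c') ^ N / h) = 1"
    by simp
qed

text \<open>If \<open>w - c\<close> and \<open>w - c'\<close> were both nilpotent with \<open>c \<noteq> c'\<close>, the partition of unity above,
  evaluated at \<open>w\<close>, would give \<open>1 = 0\<close>.\<close>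

lemma nilpotent_at_unique:
  assumes R: "cinf_ring A \<Phi>" and w: "w \<in> A" and nt: "cconst \<Phi> 0 \<noteq> cconst \<Phi> 1"
    and n1: "nilpotent_at \<Phi> w c r" and n2: "nilpotent_at \<Phi> w c' r'"
  shows "c = c'"
proof (rule ccontr)
  assume ne: "c \<noteq> c'"
  define N where "N = Suc (r + r')"
  have n1': "nilpotent_at \<Phi> w c N" by (rule nilpotent_at_mono[OF R w n1]) (simp add: N_def)
  have n2': "nilpotent_at \<Phi> w c' N" by (rule nilpotent_at_mono[OF R w n2]) (simp add: N_def)
  define h where "h s = ((s - c) ^ 2) ^ N + ((s - c') ^ 2) ^ N" for s :: real
  have h_pos: "h s > 0" for s
    using two_point_partition_of_unity(1)[OF ne] by (simp add: h_def)
  have sh: "smooth_fun 1 (\<lambda>x. h (x 0))" unfolding h_def by (intro smooth_fun_intros) auto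
  have sq: "smooth_fun 1 (\<lambda>x. (x 0 - e) ^ N / h (x 0))" for e
    by (rule smooth_fun_divide[OF _ sh])
       (use h_pos in \<open>auto intro!: smooth_fun_intros simp: less_imp_neq[symmetric]\<close>)
  have sp: "smooth_fun 1 (\<lambda>x. (x 0 - e) ^ N * ((x 0 - e) ^ N / h (x 0)))" for e
    by (rule smooth_fun_mult[OF _ sq]) (intro smooth_fun_intros, auto)
  have a: "\<And>j. j < 1 \<Longrightarrow> (\<lambda>_. w) j \<in> A" using w by simp
  have "cconst \<Phi> 1 = \<Phi> 1 (\<lambda>x. 1) (\<lambda>_. w)" using cinf_ring_const1[OF R w] by simp
  also have "\<dots> = \<Phi> 1 (\<lambda>x. (x 0 - c) ^ N * ((x 0 - c) ^ N / h (x 0)) + (x 0 - c') ^ N * ((x 0 - c') ^ N / h (x 0))) (\<lambda>_. w)"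
    using two_point_partition_of_unity(2)[OF ne] by (simp add: h_def)
  also have "\<dots> = \<Phi> 1 (\<lambda>x. (x 0 - c) ^ N * ((x 0 - c) ^ N / h (x 0))) (\<lambda>_. w)"
  proof (rule cinf_ring_add_zero[OF R sp sp a])
    show "\<Phi> 1 (\<lambda>x. (x 0 - c') ^ N * ((x 0 - c') ^ N / h (x 0))) (\<lambda>_. w) = cconst \<Phi> 0"
      by (rule cinf_ring_mult_zero_left[OF R _ sq a])
         (use n2' in \<open>auto intro!: smooth_fun_intros simp: nilpotent_at_def\<close>)
  qed
  also have "\<dots> = cconst \<Phi> 0"
    by (rule cinf_ring_mult_zero_left[OF R _ sq a]) (use n1' in \<open>auto intro!: smooth_fun_intros simp: nilpotent_at_def\<close>)
  finally show False using nt by simp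
qed

definition smooth_recip :: "real \<Rightarrow> real \<Rightarrow> real" where
  "smooth_recip e s = s / (s ^ 2 + flat (e ^ 2 - s ^ 2))"

lemma smooth_recip_denom_pos: "e > 0 \<Longrightarrow> s ^ 2 + flat (e ^ 2 - s ^ 2) > 0"
  using flat_pos[of "e ^ 2"] flat_nonneg[of "e ^ 2 - s ^ 2"]
  by (cases "s = 0") (simp_all add: add_pos_nonneg)

lemma smooth_recip_inverse: assumes "e > 0" "\<bar>s\<bar> \<ge> e" shows "s * smooth_recip e s = 1"
proof -
  have "e ^ 2 \<le> \<bar>s\<bar> ^ 2" by (rule power_mono) (use assms in auto)
  then have "flat (e ^ 2 - s ^ 2) = 0" by (intro flat_zero) simp
  moreover have "s \<noteq> 0" using assms by auto
  ultimately show ?thesis by (simp add: smooth_recip_def power2_eq_square)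
qed

lemma smooth_fun_smooth_recip:
  assumes "e > 0" "smooth_fun n K" shows "smooth_fun n (\<lambda>x. smooth_recip e (K x))"
  unfolding smooth_recip_def
proof (rule smooth_fun_divide)
  show "smooth_fun n (\<lambda>x. (K x)\<^sup>2 + flat (e\<^sup>2 - (K x)\<^sup>2))"
    by (intro smooth_fun_intros assms(2))
  show "(K x)\<^sup>2 + flat (e\<^sup>2 - (K x)\<^sup>2) \<noteq> 0" for x
    using smooth_recip_denom_pos[OF assms(1), of "K x"] by linarith
qed (rule assms(2))

lemma cinf_ring_sum_nilpotent_powers:
  assumes R: "cinf_ring A \<Phi>" and a: "\<And>i. i < n \<Longrightarrow> a i \<in> A"
    and nil: "\<And>i. i < n \<Longrightarrow> nilpotent_at \<Phi> (a i) (c i) r"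
  shows "\<Phi> n (\<lambda>x. \<Sum>i<n. (x i - c i) ^ (2 * r)) a = cconst \<Phi> 0"
proof (rule cinf_ring_sum_zero[OF R finite_lessThan _ a])
  fix i assume "i \<in> {..<n}"
  then have i: "i < n" by simp
  show "smooth_fun n (\<lambda>x. (x i - c i) ^ (2 * r))" using i by (intro smooth_fun_intros) auto
  have "\<Phi> n (\<lambda>x. (x i - c i) ^ (2 * r)) a = \<Phi> 1 (\<lambda>y. (y 0 - c i) ^ (2 * r)) (\<lambda>_. \<Phi> n (\<lambda>x. x i) a)"
    by (rule cinf_ring_compose1[OF R, of "\<lambda>s. (s - c i) ^ (2 * r)", symmetric])
       (use a i in \<open>auto intro!: smooth_fun_intros\<close>)
  also have "\<dots> = \<Phi> 1 (\<lambda>y. (y 0 - c i) ^ (2 * r)) (\<lambda>_. a i)"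
    using cinf_ring_proj[OF R i a] by simp
  also have "\<dots> = cconst \<Phi> 0"
    using nilpotent_at_mono[OF R a[OF i] nil[OF i], of "2 * r"] by (simp add: nilpotent_at_def)
  finally show "\<Phi> n (\<lambda>x. (x i - c i) ^ (2 * r)) a = cconst \<Phi> 0" .
qed

text \<open>A smooth \<open>G\<close> vanishing near \<open>c\<close> is killed by nilpotent perturbations of \<open>c\<close>: it factors
  as \<open>G = (G \<cdot> smooth_recip e N) \<cdot> N\<close> with \<open>N(x) = \<Sum>\<^sub>i (x\<^sub>i - c\<^sub>i)\<^sup>2\<^sup>r\<close>, and \<open>N\<close> is killed.\<close>

lemma cinf_ring_vanish_near_nilpotent:
  assumes R: "cinf_ring A \<Phi>" and a: "\<And>i. i < n \<Longrightarrow> a i \<in> A"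
    and nil: "\<And>i. i < n \<Longrightarrow> nilpotent_at \<Phi> (a i) (c i) r"
    and G: "smooth_fun n G" and "\<delta> > 0"
    and van: "\<And>x. (\<forall>i<n. \<bar>x i - c i\<bar> < \<delta>) \<Longrightarrow> G x = 0"
  shows "\<Phi> n G a = cconst \<Phi> 0"
proof -
  define e where "e = \<delta> ^ (2 * r)"
  have e: "e > 0" using \<open>\<delta> > 0\<close> by (simp add: e_def)
  define N where "N x = (\<Sum>i<n. (x i - c i) ^ (2 * r))" for x :: "nat \<Rightarrow> real"
  have N_nonneg: "N x \<ge> 0" for x unfolding N_def by (intro sum_nonneg) (simp add: power_mult)
  have sN: "smooth_fun n N" unfolding N_def by (intro smooth_fun_intros) auto
  have factor: "G = (\<lambda>x. (G x * smooth_recip e (N x)) * N x)"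
  proof
    fix x
    show "G x = (G x * smooth_recip e (N x)) * N x"
    proof (cases "N x \<ge> e")
      case True
      then have "N x * smooth_recip e (N x) = 1" using smooth_recip_inverse[OF e] N_nonneg[of x] by simp
      then show ?thesis by (simp add: mult.assoc mult.commute)
    next
      case False
      have "\<bar>x i - c i\<bar> < \<delta>" if "i < n" for i
      proof -
        have "(x i - c i) ^ (2 * r) \<le> N x"
          unfolding N_def by (rule member_le_sum) (use that in \<open>auto simp: power_mult\<close>)
        also have "\<dots> < \<delta> ^ (2 * r)" using False e_def by simp
        finally have "\<bar>x i - c i\<bar> ^ (2 * r) < \<delta> ^ (2 * r)" by (simp add: power_even_abs)
        then show ?thesis by (rule power_less_imp_less_base) (use \<open>\<delta> > 0\<close> in simp)
      qed
      then show ?thesis using van by simp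
    qed
  qed
  have N_zero: "\<Phi> n N a = cconst \<Phi> 0"
    unfolding N_def by (rule cinf_ring_sum_nilpotent_powers[OF R a nil])
  have "smooth_fun n (\<lambda>x. G x * smooth_recip e (N x))"
    by (intro smooth_fun_mult G smooth_fun_smooth_recip e sN)
  then have "\<Phi> n (\<lambda>x. (G x * smooth_recip e (N x)) * N x) a = cconst \<Phi> 0"
    by (rule cinf_ring_mult_zero_right[OF R _ sN a N_zero])
  then show ?thesis using factor by simp
qed

lemma nilpotent_at_common_exponent:
  fixes n :: nat
  assumes R: "cinf_ring A \<Phi>" and a: "\<And>i. i < n \<Longrightarrow> a i \<in> A"
    and nil: "\<And>i. i < n \<Longrightarrow> \<exists>r. nilpotent_at \<Phi> (a i) (c i) r"
  shows "\<exists>r. \<forall>i<n. nilpotent_at \<Phi> (a i) (c i) r"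
proof -
  have "\<forall>i. \<exists>r. i < n \<longrightarrow> nilpotent_at \<Phi> (a i) (c i) r" using nil by blast
  then obtain rr where rr: "\<And>i. i < n \<Longrightarrow> nilpotent_at \<Phi> (a i) (c i) (rr i)" by metis
  have "nilpotent_at \<Phi> (a i) (c i) (\<Sum>j<n. rr j)" if "i < n" for i
    by (rule nilpotent_at_mono[OF R a[OF that] rr[OF that]]) (use that in \<open>auto intro!: member_le_sum\<close>)
  then show ?thesis by blast
qed

lemma nilpotent_at_recip_power:
  assumes R: "cinf_ring A \<Phi>" and y: "y \<in> A" and nil: "nilpotent_at \<Phi> y d r" and "e > 0"
  shows "\<Phi> 1 (\<lambda>z. ((z 0 - d) * smooth_recip e (z 0 - d)) ^ r - 1) (\<lambda>_. y) = cconst \<Phi> (-1)"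
proof -
  have "\<Phi> 1 (\<lambda>z. ((z 0 - d) * smooth_recip e (z 0 - d)) ^ r - 1) (\<lambda>_. y) =
      \<Phi> 1 (\<lambda>z. (z 0 - d) ^ r * smooth_recip e (z 0 - d) ^ r - 1) (\<lambda>_. y)"
    by (simp add: power_mult_distrib)
  also have "\<dots> = \<Phi> 1 (\<lambda>z. (\<lambda>_. 0) z * smooth_recip e (z 0 - d) ^ r - 1) (\<lambda>_. y)"
  proof (rule cinf_ring_cong2[OF R, where H="\<lambda>u v. u * v - 1"])
    show "\<Phi> 1 (\<lambda>z. (z 0 - d) ^ r) (\<lambda>_. y) = \<Phi> 1 (\<lambda>_. 0) (\<lambda>_. y)"
      using nil cinf_ring_const1[OF R y] by (simp add: nilpotent_at_def)
  qed (use y \<open>e > 0\<close> in \<open>auto intro!: smooth_fun_intros smooth_fun_smooth_recip\<close>)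
  also have "\<dots> = cconst \<Phi> (-1)"
    using cinf_ring_const1[OF R y] by simp
  finally show ?thesis .
qed

text \<open>Otherwise \<open>f\<close> stays away from the real part \<open>d \<noteq> f c\<close> of \<open>f(a)\<close> near \<open>c\<close>, so
  \<open>K(u) = ((u - d) \<cdot> smooth_recip \<epsilon> (u - d))\<^sup>r - 1\<close> composed with \<open>f\<close> vanishes near \<open>c\<close> and is
  killed by \<open>a\<close>, while \<open>K(f(a)) = -1\<close>.\<close>

lemma weil_nilpotent_at_ops:
  assumes W: "weil W \<Psi>" and a: "\<And>i. i < n \<Longrightarrow> a i \<in> W"
    and nil: "\<And>i. i < n \<Longrightarrow> \<exists>r. nilpotent_at \<Psi> (a i) (c i) r" and f: "smooth_fun n f"
  shows "\<exists>r. nilpotent_at \<Psi> (\<Psi> n f a) (f c) r"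
proof -
  have R: "cinf_ring W \<Psi>" using W by (rule weil_cinf_ring)
  have "\<exists>r. \<forall>i<n. nilpotent_at \<Psi> (a i) (c i) r"
    by (rule nilpotent_at_common_exponent[OF R]) (use a nil in auto)
  then obtain r' where nil': "\<And>i. i < n \<Longrightarrow> nilpotent_at \<Psi> (a i) (c i) r'" by blast
  define y where "y = \<Psi> n f a"
  have y: "y \<in> W" unfolding y_def by (rule cinf_ring_closed[OF R f a])
  obtain d r where "nilpotent_at \<Psi> y d r" using weil_ex_nilpotent_at[OF W y] by blast
  then have y_nil: "nilpotent_at \<Psi> y d (Suc r)" by (rule nilpotent_at_mono[OF R y]) simp
  show ?thesis
  proof (cases "d = f c")
    case True then show ?thesis using y_nil y_def by blast
  next
    case False
    define \<epsilon> where "\<epsilon> = \<bar>f c - d\<bar> / 2"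
    have \<epsilon>: "\<epsilon> > 0" using False by (simp add: \<epsilon>_def)
    have "depends_on_first n f" using f by (simp add: smooth_fun_iff)
    then obtain \<delta> where "\<delta> > 0" and near: "\<And>x. (\<forall>i<n. \<bar>x i - c i\<bar> < \<delta>) \<Longrightarrow> \<bar>f x - f c\<bar> < \<epsilon>"
      using continuous_cube_nbhd[OF _ smooth_fun_continuous[OF f] \<epsilon>, where c = c] by blast
    define K where "K u = ((u - d) * smooth_recip \<epsilon> (u - d)) ^ Suc r - 1" for u
    have K: "smooth_fun m (\<lambda>x. K (F x))" if "smooth_fun m F" for m F
      unfolding K_def by (intro smooth_fun_intros smooth_fun_smooth_recip \<epsilon> that)
    have "K (f x) = 0" if "\<forall>i<n. \<bar>x i - c i\<bar> < \<delta>" for x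
    proof -
      have "\<bar>f x - d\<bar> \<ge> \<epsilon>" using near[OF that] dist_triangle[of "f c" d "f x"] unfolding \<epsilon>_def dist_real_def
        by (simp add: abs_minus_commute)
      then show ?thesis by (simp add: K_def smooth_recip_inverse[OF \<epsilon>])
    qed
    then have "\<Psi> n (\<lambda>x. K (f x)) a = cconst \<Psi> 0"
      by (intro cinf_ring_vanish_near_nilpotent[OF R a nil' K[OF f] \<open>\<delta> > 0\<close>]) auto
    moreover have "\<Psi> n (\<lambda>x. K (f x)) a = \<Psi> 1 (\<lambda>z. K (z 0)) (\<lambda>_. y)"
      unfolding y_def by (rule cinf_ring_compose1[OF R _ f a, symmetric]) (rule K, rule smooth_fun_proj, simp)
    ultimately have "cconst \<Psi> (-1) = cconst \<Psi> 0"
      using nilpotent_at_recip_power[OF R y y_nil \<epsilon>] unfolding K_def by simp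
    then have "cconst \<Psi> (-1 + 1) = cconst \<Psi> (0 + 1)" by (rule cconst_add_eq[OF R])
    then show ?thesis using weil_nontrivial[OF W] by simp
  qed
qed

definition real_part :: "'a cops \<Rightarrow> 'a \<Rightarrow> real" where
  "real_part \<Psi> w = (THE c. \<exists>r. nilpotent_at \<Psi> w c r)"

lemma real_part_nilpotent:
  assumes W: "weil W \<Psi>" and w: "w \<in> W"
  shows "\<exists>r. nilpotent_at \<Psi> w (real_part \<Psi> w) r"
proof -
  have "\<exists>!c. \<exists>r. nilpotent_at \<Psi> w c r"
    using weil_ex_nilpotent_at[OF W w] nilpotent_at_unique[OF weil_cinf_ring[OF W] w weil_nontrivial[OF W]]
    by blast
  then show ?thesis unfolding real_part_def by (rule theI')
qed

lemma real_part_eq: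
  assumes W: "weil W \<Psi>" and w: "w \<in> W" and "nilpotent_at \<Psi> w c r"
  shows "real_part \<Psi> w = c"
  using real_part_nilpotent[OF W w] nilpotent_at_unique[OF weil_cinf_ring[OF W] w weil_nontrivial[OF W]]
    assms(3) by blast

lemma real_part_ops:
  assumes W: "weil W \<Psi>" and f: "smooth_fun n f" and a: "\<And>i. i < n \<Longrightarrow> a i \<in> W"
  shows "real_part \<Psi> (\<Psi> n f a) = f (\<lambda>i. real_part \<Psi> (a i))"
proof -
  have "\<exists>r. nilpotent_at \<Psi> (\<Psi> n f a) (f (\<lambda>i. real_part \<Psi> (a i))) r"
    by (rule weil_nilpotent_at_ops[OF W a _ f]) (use real_part_nilpotent[OF W a] in auto)
  then obtain r where "nilpotent_at \<Psi> (\<Psi> n f a) (f (\<lambda>i. real_part \<Psi> (a i))) r" ..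
  moreover have "\<Psi> n f a \<in> W" by (rule cinf_ring_closed[OF weil_cinf_ring[OF W] f a])
  ultimately show ?thesis using real_part_eq[OF W] by blast
qed

lemma is_point_real_part_comp:
  assumes W: "weil W \<Psi>" and h: "cinf_hom A \<Phi> W \<Psi> h"
  shows "is_point A \<Phi> (\<lambda>x. real_part \<Psi> (h x))"
  unfolding is_point_def cinf_hom_def
proof (intro conjI allI impI ballI)
  fix n f a assume fa: "smooth_fun n f \<and> (\<forall>i<n. a i \<in> A)"
  then have "h (a i) \<in> W" if "i < n" for i using h that by (auto intro: cinf_hom_closed)
  then show "real_part \<Psi> (h (\<Phi> n f a)) = real_ops n f (\<lambda>i. real_part \<Psi> (h (a i)))"
    using real_part_ops[OF W] cinf_hom_ops[OF h] fa by (simp add: real_ops_def)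
qed simp

lemma cinf_ring_vanish_on_nonneg:
  assumes R: "cinf_ring W \<Psi>" and w: "w \<in> W" and n: "nilpotent_at \<Psi> w c r" and "c \<ge> 0"
    and D: "smooth_real D" and van: "\<And>t. t \<ge> 0 \<Longrightarrow> D t = 0"
  shows "\<Psi> 1 (\<lambda>x. D (x 0)) (\<lambda>_. w) = cconst \<Psi> 0"
proof -
  obtain e where e: "smooth_real e" "\<forall>s. D s = (s - c) ^ r * e s"
    using hadamard_vanishing_on_nonneg_power[OF D van \<open>c \<ge> 0\<close>, of r] by blast
  have "\<Psi> 1 (\<lambda>x. (x 0 - c) ^ r * e (x 0)) (\<lambda>_. w) = cconst \<Psi> 0"
    by (rule cinf_ring_mult_zero_left[OF R])
       (use n w smooth_real_imp_smooth_fun[OF e(1)] in \<open>auto intro!: smooth_fun_intros simp: nilpotent_at_def\<close>)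
  then show ?thesis using e(2) by simp
qed

lemma cinf_ring_agree_on_nonneg:
  assumes R: "cinf_ring W \<Psi>" and w: "w \<in> W" and n: "nilpotent_at \<Psi> w c r" and c: "c \<ge> 0"
    and g: "smooth_real g" and g': "smooth_real g'" and eq: "\<And>t. t \<ge> 0 \<Longrightarrow> g t = g' t"
  shows "\<Psi> 1 (\<lambda>x. g (x 0)) (\<lambda>_. w) = \<Psi> 1 (\<lambda>x. g' (x 0)) (\<lambda>_. w)"
proof -
  have sg: "smooth_fun 1 (\<lambda>x. g (x 0))" "smooth_fun 1 (\<lambda>x. g' (x 0))"
    by (rule smooth_real_imp_smooth_fun[OF g], rule smooth_real_imp_smooth_fun[OF g'])
  have sD: "smooth_fun 1 (\<lambda>x. g (x 0) - g' (x 0))" by (rule smooth_fun_diff[OF sg])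
  then have "smooth_real (\<lambda>s. g s - g' s)" by (intro smooth_fun_imp_smooth_real) simp
  from cinf_ring_vanish_on_nonneg[OF R w n c this] have z: "\<Psi> 1 (\<lambda>x. g (x 0) - g' (x 0)) (\<lambda>_. w) = cconst \<Psi> 0"
    using eq by simp
  have "\<Psi> 1 (\<lambda>x. g (x 0)) (\<lambda>_. w) = \<Psi> 1 (\<lambda>x. g' (x 0) + (g (x 0) - g' (x 0))) (\<lambda>_. w)" by simp
  also have "\<dots> = \<Psi> 1 (\<lambda>x. g' (x 0)) (\<lambda>_. w)"
    by (rule cinf_ring_add_zero[OF R sg(2) sD _ z]) (use w in simp)
  finally show ?thesis .
qed

section \<open>Factoring through \<open>H\<close>\<close>

lemma id_in_CinfR: "(\<lambda>t. t) \<in> CinfR"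
  unfolding CinfR_def by (simp add: smooth_fun_proj)

lemma cinf_hom_CinfR_comp_eval:
  assumes v: "cinf_hom CinfR CinfR_ops A \<Phi> v" and h: "cinf_hom A \<Phi> B \<Psi> h" and g: "g \<in> CinfR"
  shows "h (v g) = \<Psi> 1 (\<lambda>x. g (x 0)) (\<lambda>_. h (v (\<lambda>t. t)))"
proof -
  have "v g = v (CinfR_ops 1 (\<lambda>x. g (x 0)) (\<lambda>_ t. t))" by (simp add: CinfR_ops_def)
  also have "\<dots> = \<Phi> 1 (\<lambda>x. g (x 0)) (\<lambda>_. v (\<lambda>t. t))"
    by (rule cinf_hom_ops[OF v]) (use g id_in_CinfR in \<open>auto simp: CinfR_def\<close>)
  finally have "h (v g) = h (\<Phi> 1 (\<lambda>x. g (x 0)) (\<lambda>_. v (\<lambda>t. t)))" by simp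
  also have "\<dots> = \<Psi> 1 (\<lambda>x. g (x 0)) (\<lambda>_. h (v (\<lambda>t. t)))"
    by (rule cinf_hom_ops[OF h]) (use g cinf_hom_closed[OF v id_in_CinfR] in \<open>auto simp: CinfR_def\<close>)
  finally show ?thesis .
qed

lemma is_point_CinfR_comp_eval:
  assumes "cinf_hom CinfR CinfR_ops A \<Phi> v" "is_point A \<Phi> p" "g \<in> CinfR"
  shows "p (v g) = g (p (v (\<lambda>t. t)))"
  using cinf_hom_CinfR_comp_eval[OF assms(1) assms(2)[unfolded is_point_def] assms(3)]
  by (simp add: real_ops_def)

lemma point_nonneg_if_factors_through_qH:
  assumes v: "cinf_hom CinfR CinfR_ops A \<Phi> v" and u: "\<forall>g\<in>CinfR. v g = u (qH g)"
    and p: "is_point A \<Phi> p"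
  shows "p (v (\<lambda>t. t)) \<ge> 0"
proof (rule ccontr)
  assume neg: "\<not> p (v (\<lambda>t. t)) \<ge> 0"
  define G where "G s = flat (- s)" for s
  have G: "G \<in> CinfR" unfolding CinfR_def G_def by (simp, intro smooth_fun_intros) auto
  have zero: "(\<lambda>_. 0) \<in> CinfR" unfolding CinfR_def by (simp add: smooth_fun_const)
  have "qH G = qH (\<lambda>_. 0)" unfolding qH_def G_def by (auto simp: flat_zero)
  then have "v G = v (\<lambda>_. 0)" using u G zero by metis
  then have "G (p (v (\<lambda>t. t))) = 0"
    using is_point_CinfR_comp_eval[OF v p G] is_point_CinfR_comp_eval[OF v p zero] by simp
  moreover have "G (p (v (\<lambda>t. t))) > 0" unfolding G_def using neg by (intro flat_pos) simp
  ultimately show False by simp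
qed

lemma agree_on_nonneg_if_points_nonneg:
  assumes "W_determined A \<Phi>" and v: "cinf_hom CinfR CinfR_ops A \<Phi> v"
    and nonneg: "\<And>p. is_point A \<Phi> p \<Longrightarrow> p (v (\<lambda>t. t)) \<ge> 0"
    and g: "g \<in> CinfR" and g': "g' \<in> CinfR" and eq: "\<And>t. t \<ge> 0 \<Longrightarrow> g t = g' t"
  shows "v g = v g'"
proof (rule ccontr)
  assume "v g \<noteq> v g'"
  moreover have "v g \<in> A" "v g' \<in> A" using cinf_hom_closed[OF v] g g' by auto
  ultimately obtain W \<Psi> h where W: "weil W \<Psi>" and h: "cinf_hom A \<Phi> W \<Psi> h" and ne: "h (v g) \<noteq> h (v g')"
    using assms(1) unfolding W_determined_def by blast
  define w where "w = h (v (\<lambda>t. t))"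
  have w: "w \<in> W" unfolding w_def by (rule cinf_hom_closed[OF h cinf_hom_closed[OF v id_in_CinfR]])
  have c: "real_part \<Psi> w \<ge> 0"
    using nonneg[OF is_point_real_part_comp[OF W h]] by (simp add: w_def)
  obtain r where r: "nilpotent_at \<Psi> w (real_part \<Psi> w) r" using real_part_nilpotent[OF W w] ..
  have "\<Psi> 1 (\<lambda>x. g (x 0)) (\<lambda>_. w) = \<Psi> 1 (\<lambda>x. g' (x 0)) (\<lambda>_. w)"
    by (rule cinf_ring_agree_on_nonneg[OF weil_cinf_ring[OF W] w r c])
       (use g g' eq in \<open>auto simp: CinfR_iff_smooth_real\<close>)
  then show False
    using ne cinf_hom_CinfR_comp_eval[OF v h g] cinf_hom_CinfR_comp_eval[OF v h g'] by (simp add: w_def)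
qed

lemma CinfR_ops_in_CinfR:
  "smooth_fun n f \<Longrightarrow> (\<And>i. i < n \<Longrightarrow> g i \<in> CinfR) \<Longrightarrow> CinfR_ops n f g \<in> CinfR"
  unfolding CinfR_def CinfR_ops_def by (auto intro: smooth_fun_compose)

definition CinfH_rep :: "(real \<Rightarrow> real) set \<Rightarrow> real \<Rightarrow> real" where
  "CinfH_rep S = (SOME g. g \<in> CinfR \<and> S = qH g)"

lemma CinfH_rep: assumes "S \<in> CinfH" shows "CinfH_rep S \<in> CinfR \<and> S = qH (CinfH_rep S)"
proof -
  have "\<exists>g. g \<in> CinfR \<and> S = qH g" using assms by (auto simp: CinfH_def)
  then show ?thesis unfolding CinfH_rep_def by (rule someI_ex)
qed

lemma CinfH_ops_eq: "CinfH_ops n f c = qH (CinfR_ops n f (\<lambda>i. CinfH_rep (c i)))"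
  by (simp add: CinfH_ops_def CinfH_rep_def)

lemma factors_through_qH_if_agree_on_nonneg:
  assumes R: "cinf_ring A \<Phi>" and v: "cinf_hom CinfR CinfR_ops A \<Phi> v"
    and agree: "\<And>g g'. g \<in> CinfR \<Longrightarrow> g' \<in> CinfR \<Longrightarrow> (\<And>t. t \<ge> 0 \<Longrightarrow> g t = g' t) \<Longrightarrow> v g = v g'"
  shows "\<exists>u. cinf_hom CinfH CinfH_ops A \<Phi> u \<and> (\<forall>g\<in>CinfR. v g = u (qH g))"
proof -
  define u where "u S = v (CinfH_rep S)" for S
  have u: "u (qH g) = v g" if g: "g \<in> CinfR" for g
  proof -
    have rep: "CinfH_rep (qH g) \<in> CinfR" "qH g = qH (CinfH_rep (qH g))"
      using CinfH_rep[of "qH g"] g by (auto simp: CinfH_def)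
    moreover have "g \<in> qH g" using g by (simp add: qH_def)
    ultimately have "\<forall>t\<ge>0. g t = CinfH_rep (qH g) t" by (auto simp: qH_def)
    then show ?thesis unfolding u_def using agree[OF rep(1) g] by simp
  qed
  have "cinf_hom CinfH CinfH_ops A \<Phi> u"
    unfolding cinf_hom_def
  proof (intro conjI ballI allI impI)
    fix S assume "S \<in> CinfH"
    then show "u S \<in> A" unfolding u_def using CinfH_rep cinf_hom_closed[OF v] by simp
  next
    fix n f c assume fc: "smooth_fun n f \<and> (\<forall>i<n. c i \<in> CinfH)"
    then have rep: "CinfH_rep (c i) \<in> CinfR" if "i < n" for i
      using CinfH_rep that by blast
    have "u (CinfH_ops n f c) = v (CinfR_ops n f (\<lambda>i. CinfH_rep (c i)))"
      unfolding CinfH_ops_eq using u CinfR_ops_in_CinfR fc rep by simp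
    also have "\<dots> = \<Phi> n f (\<lambda>i. u (c i))"
      unfolding u_def by (rule cinf_hom_ops[OF v]) (use fc rep in auto)
    finally show "u (CinfH_ops n f c) = \<Phi> n f (\<lambda>i. u (c i))" .
  qed
  then show ?thesis using u by auto
qed

theorem corollary5p4:
  fixes A :: "'a set" and \<Phi> :: "'a cops" and v :: "(real \<Rightarrow> real) \<Rightarrow> 'a"
  assumes "in_CW A \<Phi>"
    and "cinf_hom CinfR CinfR_ops A \<Phi> v"
  shows "(\<exists>u. cinf_hom CinfH CinfH_ops A \<Phi> u \<and> (\<forall>g\<in>CinfR. v g = u (qH g)))
     \<longleftrightarrow> (\<forall>p. is_point A \<Phi> p \<longrightarrow> p (v (\<lambda>t. t)) \<in> {0..})"
proof
  assume "\<exists>u. cinf_hom CinfH CinfH_ops A \<Phi> u \<and> (\<forall>g\<in>CinfR. v g = u (qH g))"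
  then show "\<forall>p. is_point A \<Phi> p \<longrightarrow> p (v (\<lambda>t. t)) \<in> {0..}"
    using point_nonneg_if_factors_through_qH[OF assms(2)] by auto
next
  assume "\<forall>p. is_point A \<Phi> p \<longrightarrow> p (v (\<lambda>t. t)) \<in> {0..}"
  then have nonneg: "\<And>p. is_point A \<Phi> p \<Longrightarrow> p (v (\<lambda>t. t)) \<ge> 0" by auto
  have R: "cinf_ring A \<Phi>" and W: "W_determined A \<Phi>" using assms(1) by (simp_all add: in_CW_def)
  have "v g = v g'" if "g \<in> CinfR" "g' \<in> CinfR" "\<And>t. t \<ge> 0 \<Longrightarrow> g t = g' t" for g g'
    by (rule agree_on_nonneg_if_points_nonneg[OF W assms(2)]) (use nonneg that in auto)
  then show "\<exists>u. cinf_hom CinfH CinfH_ops A \<Phi> u \<and> (\<forall>g\<in>CinfR. v g = u (qH g))"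
    by (rule factors_through_qH_if_agree_on_nonneg[OF R assms(2)])
qed

end
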